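(* Let $\mathbf{B}$ be the interaction matrix of a $q$-spin system and $\Delta\geq3$. Then: (1) There is a one-to-one correspondence between the fixpoints of the tree recursions and the critical points of $\Phi$ (both considered for $R_i\geq0$, $C_j\geq0$ up to scaling by a positive constant). (2) The transformation $(\mathbf{r},\mathbf{c})\mapsto(\boldsymbol{\alpha},\boldsymbol{\beta})$ given by $\alpha_i=R_i^{\Delta/(\Delta-1)}/\sum_{i'}R_{i'}^{\Delta/(\Delta-1)}$ and $\beta_j=C_j^{\Delta/(\Delta-1)}/\sum_{j'}C_{j'}^{\Delta/(\Delta-1)}$ yields a one-to-one correspondence between the critical points of $\Phi$ and the critical points of $\Psi_1$ in the region $\{\alpha_i\geq0,\beta_j\geq0,\sum_i\alpha_i=1,\sum_j\beta_j=1\}$. (3) For corresponding critical points $(\mathbf{r},\mathbf{c})$ and $(\boldsymbol{\alpha},\boldsymbol{\beta})$, $\Phi(\mathbf{r},\mathbf{c})=\Psi_1(\boldsymbol{\alpha},\boldsymbol{\beta})$. (4) If $\mathbf{B}$ is ergodic, the local maxima of $\Phi$ and of $\Psi_1$ occur at critical points, i.e., there are no local maxima on the boundary (every local maximum has all $R_i,C_j>0$, respectively all $\alpha_i,\beta_j>0$).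
   Context: $\mathbf{B}=(B_{ij})$ is a symmetric $q\times q$ matrix with nonnegative entries (irreducible, as a standing assumption); ergodic means irreducible and aperiodic. Let $p=\Delta/(\Delta-1)$. For nonnegative $\mathbf{r}=(R_1,\dots,R_q)$, $\mathbf{c}=(C_1,\dots,C_q)$, $\Phi(\mathbf{r},\mathbf{c})$ is defined by $\exp(\Phi(\mathbf{r},\mathbf{c})/\Delta)=\frac{\mathbf{r}^{\intercal}\mathbf{B}\mathbf{c}}{\|\mathbf{r}\|_p\|\mathbf{c}\|_p}$. The tree recursions are $\hat R_i\propto(\sum_{j}B_{ij}C_j)^{\Delta-1}$, $\hat C_j\propto(\sum_{i}B_{ij}R_i)^{\Delta-1}$ (proportionality constants independent of $i$, resp. $j$); a fixpoint is $(\mathbf{r},\mathbf{c})$ with $\hat R_i\propto R_i$ and $\hat C_j\propto C_j$ for all $i,j$. $\Psi_1$ is defined on $\triangle_q\times\triangle_q$ ($\triangle_q$ the probability simplex) by $\Psi_1(\boldsymbol{\alpha},\boldsymbol{\beta})=\max_{\mathbf{x}}[(\Delta-1)(\sum_i\alpha_i\ln\alpha_i+\sum_j\beta_j\ln\beta_j)+\Delta\sum_{i,j}x_{ij}(\ln B_{ij}-\ln x_{ij})]$ over nonnegative $\mathbf{x}\in\mathbb{R}^{q\times q}$ with $\sum_jx_{ij}=\alpha_i$, $\sum_ix_{ij}=\beta_j$ (conventions $\ln0=-\infty$, $0\ln0=0$); it is the exponential growth rate $\lim_n\frac1n\log\mathbf{E}[Z^{\boldsymbol{\alpha},\boldsymbol{\beta}}_G]$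 of the expected total weight of configurations with spin frequencies $\boldsymbol{\alpha}$ on one side and $\boldsymbol{\beta}$ on the other side of a random $\Delta$-regular bipartite graph (union of $\Delta$ random perfect matchings). *)

theory Defs
  imports "HOL-Analysis.Analysis"
begin

text \<open>Spin vectors and the interaction matrix are indexed by a finite type 'q (the q spins).\<close>

definition pexp :: "nat \<Rightarrow> real" where
  "pexp \<Delta> = real \<Delta> / (real \<Delta> - 1)"

definition pnorm :: "real \<Rightarrow> real^'q \<Rightarrow> real" where
  "pnorm p r = (\<Sum>i\<in>UNIV. \<bar>r$i\<bar> powr p) powr (1 / p)"

definition Phi :: "real^'q^'q \<Rightarrow> nat \<Rightarrow> ((real^'q) \<times> (real^'q)) \<Rightarrow> ereal" where
  "Phi B \<Delta> rc =
     (let r = fst rc; c = snd rc;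
          z = (r \<bullet> (B *v c)) / (pnorm (pexp \<Delta>) r * pnorm (pexp \<Delta>) c)
      in if z > 0 then ereal (real \<Delta> * ln z) else -\<infinity>)"

definition PhiDom :: "((real^'q) \<times> (real^'q)) set" where
  "PhiDom = {(r, c). (\<forall>i. 0 \<le> r$i) \<and> (\<forall>j. 0 \<le> c$j) \<and> r \<noteq> 0 \<and> c \<noteq> 0}"

definition SimDom :: "((real^'q) \<times> (real^'q)) set" where
  "SimDom = {(a, b). (\<forall>i. 0 \<le> a$i) \<and> (\<Sum>i\<in>UNIV. a$i) = 1 \<and>
                      (\<forall>j. 0 \<le> b$j) \<and> (\<Sum>j\<in>UNIV. b$j) = 1}"

definition xlogterm :: "real \<Rightarrow> real \<Rightarrow> ereal" where
  "xlogterm b x = (if x = 0 then 0 else if b = 0 then -\<infinity> else ereal (x * (ln b - ln x)))"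

definition Psi1 :: "real^'q^'q \<Rightarrow> nat \<Rightarrow> ((real^'q) \<times> (real^'q)) \<Rightarrow> ereal" where
  "Psi1 B \<Delta> ab =
     (let a = fst ab; b = snd ab
      in ereal ((real \<Delta> - 1) * ((\<Sum>i\<in>UNIV. a$i * ln (a$i)) + (\<Sum>j\<in>UNIV. b$j * ln (b$j))))
         + ereal (real \<Delta>) *
           (SUP x \<in> {x :: real^'q^'q. (\<forall>i j. 0 \<le> x$i$j) \<and> (\<forall>i. (\<Sum>j\<in>UNIV. x$i$j) = a$i)
                                      \<and> (\<forall>j. (\<Sum>i\<in>UNIV. x$i$j) = b$j)}.
              (\<Sum>i\<in>UNIV. \<Sum>j\<in>UNIV. xlogterm (B$i$j) (x$i$j))))"

definition Tmap :: "nat \<Rightarrow> ((real^'q) \<times> (real^'q)) \<Rightarrow> ((real^'q) \<times> (real^'q))" where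
  "Tmap \<Delta> rc =
     (let p = pexp \<Delta>; r = fst rc; c = snd rc
      in ((\<chi> i. r$i powr p / (\<Sum>i'\<in>UNIV. r$i' powr p)),
          (\<chi> j. c$j powr p / (\<Sum>j'\<in>UNIV. c$j' powr p))))"

definition tree_fixpoint :: "real^'q^'q \<Rightarrow> nat \<Rightarrow> real^'q \<Rightarrow> real^'q \<Rightarrow> bool" where
  "tree_fixpoint B \<Delta> r c \<longleftrightarrow>
     (\<exists>k>0. \<forall>i. (\<Sum>j\<in>UNIV. B$i$j * c$j) ^ (\<Delta> - 1) = k * r$i) \<and>
     (\<exists>\<mu>>0. \<forall>j. (\<Sum>i\<in>UNIV. B$i$j * r$i) ^ (\<Delta> - 1) = \<mu> * c$j)"

text \<open>Critical (stationary) point of an extended-real valued function f on a convex set K: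
  f finite at p, and in every feasible direction q - p (q in K) the upper one-sided
  directional derivative is at most 0.  For directions that are feasible both ways this forces
  the derivative to vanish; at boundary points it forces one-sided derivatives to be <= 0
  (possibly -infinity).\<close>
definition crit_point :: "('a::real_vector \<Rightarrow> ereal) \<Rightarrow> 'a set \<Rightarrow> 'a \<Rightarrow> bool" where
  "crit_point f K p \<longleftrightarrow> p \<in> K \<and> f p \<noteq> -\<infinity> \<and> f p \<noteq> \<infinity> \<and>
     (\<forall>q\<in>K. \<forall>\<epsilon>>0. \<forall>\<^sub>F t in at_right 0. f (p + t *\<^sub>R (q - p)) \<le> f p + ereal (\<epsilon> * t))"

definition local_max :: "('a::metric_space \<Rightarrow> ereal) \<Rightarrow> 'a set \<Rightarrow> 'a \<Rightarrow> bool" where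
  "local_max f K p \<longleftrightarrow> p \<in> K \<and> f p \<noteq> -\<infinity> \<and>
     (\<exists>e>0. \<forall>p'\<in>K. dist p' p < e \<longrightarrow> f p' \<le> f p)"

fun mpow :: "real^'q^'q \<Rightarrow> nat \<Rightarrow> real^'q^'q" where
  "mpow B 0 = mat 1"
| "mpow B (Suc k) = B ** mpow B k"

definition irreducible_mat :: "real^'q^'q \<Rightarrow> bool" where
  "irreducible_mat B \<longleftrightarrow> (\<forall>i j. \<exists>k. 0 < mpow B k $ i $ j)"

definition aperiodic_mat :: "real^'q^'q \<Rightarrow> bool" where
  "aperiodic_mat B \<longleftrightarrow> (\<forall>i. Gcd {k::nat. 0 < k \<and> 0 < mpow B k $ i $ i} = 1)"

definition ergodic_mat :: "real^'q^'q \<Rightarrow> bool" where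
  "ergodic_mat B \<longleftrightarrow> irreducible_mat B \<and> aperiodic_mat B"

end

theory Submission
  imports Defs "HOL-Real_Asymp.Real_Asymp"
begin

text \<open>
  Put \<open>s = (\<Delta> - 1) / \<Delta> = 1 / p\<close> and \<open>G(\<alpha>, \<beta>) = \<Sum>\<^sub>i\<^sub>j B\<^sub>i\<^sub>j \<alpha>\<^sub>i\<^sup>s \<beta>\<^sub>j\<^sup>s\<close>. Since \<open>Tmap\<close> is inverted
  up to scaling by \<open>R\<^sub>i \<propto> \<alpha>\<^sub>i\<^sup>s\<close>, we get \<open>Phi(r, c) = \<Delta> ln G(Tmap (r, c))\<close>, and the first-order
  (Karush-Kuhn-Tucker) conditions for the scale-invariant \<open>Phi\<close> on the nonnegative cone are
  \<open>(B c)\<^sub>i \<propto> R\<^sub>i\<^sup>p\<^sup>-\<^sup>1\<close>, \<open>(r B)\<^sub>j \<propto> C\<^sub>j\<^sup>p\<^sup>-\<^sup>1\<close>, which are the tree recursions with roots taken.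

  For \<open>Psi1\<close>, Gibbs' inequality bounds the inner maximum over couplings \<open>x\<close> of \<open>(\<alpha>, \<beta>)\<close>:
  \<open>Psi1 \<le> \<Delta> ln G\<close>, with equality exactly when \<open>x\<^sub>i\<^sub>j \<propto> B\<^sub>i\<^sub>j \<alpha>\<^sub>i\<^sup>s \<beta>\<^sub>j\<^sup>s\<close> has marginals
  \<open>\<alpha>, \<beta>\<close>, i.e. at fixpoints; there \<open>Psi1 = \<Delta> ln G\<close> is stationary because \<open>G\<close> is. Conversely, at a
  critical point of \<open>Psi1\<close> an optimal coupling exists (by compactness), and the critical point
  condition towards the vertices \<open>(e\<^sub>i, e\<^sub>j)\<close>, with the point mass at \<open>(i, j)\<close> as coupling, forces it
  to be of that product form: the \<open>t ln t\<close> singularity of the entropy at the boundary decides the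
  support, and the remaining first-order terms make \<open>ln (B\<^sub>i\<^sub>j \<alpha>\<^sub>i\<^sup>s \<beta>\<^sub>j\<^sup>s / x\<^sub>i\<^sub>j)\<close> constant.

  Local maxima are critical points. At a fixpoint, positivity propagates along the edges of \<open>B\<close>,
  alternating between \<open>r\<close> and \<open>c\<close>; aperiodicity supplies a closed walk of odd length and
  irreducibility reaches every vertex, so every coordinate is positive.
\<close>

section \<open>One-sided slopes\<close>

definition right_slope_nonpos :: "(real \<Rightarrow> real) \<Rightarrow> bool" where
  "right_slope_nonpos g \<longleftrightarrow> (\<forall>\<epsilon>>0. \<forall>\<^sub>F t in at_right 0. g t \<le> g 0 + \<epsilon> * t)"

lemma right_slope_nonpos_iff_deriv:
  assumes "(g has_real_derivative g') (at_right 0)"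
  shows "right_slope_nonpos g \<longleftrightarrow> g' \<le> 0"
proof -
  have quot: "((\<lambda>t. (g t - g 0) / t) \<longlongrightarrow> g') (at_right 0)"
    using assms unfolding has_field_derivative_iff by simp
  have pos: "\<forall>\<^sub>F t::real in at_right 0. t > 0"
    by (simp add: eventually_at_right_less)
  show ?thesis
  proof
    assume H: "right_slope_nonpos g"
    show "g' \<le> 0"
    proof (rule ccontr)
      assume "\<not> g' \<le> 0"
      hence "g' / 2 > 0" by simp
      with H have "\<forall>\<^sub>F t in at_right 0. g t \<le> g 0 + g' / 2 * t"
        unfolding right_slope_nonpos_def by blast
      moreover have "\<forall>\<^sub>F t in at_right 0. (g t - g 0) / t > g' / 2"
        using quot \<open>\<not> g' \<le> 0\<close> by (intro order_tendstoD) auto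
      ultimately have "\<forall>\<^sub>F t in at_right (0::real). False"
        using pos by eventually_elim (auto simp: field_simps)
      thus False by simp
    qed
  next
    assume "g' \<le> 0"
    show "right_slope_nonpos g" unfolding right_slope_nonpos_def
    proof (intro allI impI)
      fix \<epsilon> :: real assume "\<epsilon> > 0"
      have "\<forall>\<^sub>F t in at_right 0. (g t - g 0) / t < \<epsilon>"
        using \<open>g' \<le> 0\<close> \<open>\<epsilon> > 0\<close> by (intro order_tendstoD(2)[OF quot]) auto
      with pos show "\<forall>\<^sub>F t in at_right 0. g t \<le> g 0 + \<epsilon> * t"
        by eventually_elim (auto simp: field_simps)
    qed
  qed
qed

lemma right_slope_nonpos_cong:
  assumes "\<forall>\<^sub>F t in at_right 0. f t = g t" and "f 0 = g 0"
  shows "right_slope_nonpos f \<longleftrightarrow> right_slope_nonpos g"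
proof -
  have "(\<forall>\<^sub>F t in at_right 0. f t \<le> f 0 + \<epsilon> * t) \<longleftrightarrow> (\<forall>\<^sub>F t in at_right 0. g t \<le> g 0 + \<epsilon> * t)"
    for \<epsilon>
    using assms by (intro eventually_subst) (auto elim: eventually_mono)
  thus ?thesis unfolding right_slope_nonpos_def by simp
qed

lemma ereal_slope_bound_iff_right_slope_nonpos:
  assumes "\<forall>\<^sub>F t in at_right 0. F t = ereal (f t)" and "F0 = ereal (f 0)"
  shows "(\<forall>\<epsilon>>0. \<forall>\<^sub>F t in at_right 0. F t \<le> F0 + ereal (\<epsilon> * t)) \<longleftrightarrow> right_slope_nonpos f"
proof -
  have "(\<forall>\<^sub>F t in at_right 0. F t \<le> F0 + ereal (\<epsilon> * t)) \<longleftrightarrow>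
        (\<forall>\<^sub>F t in at_right 0. f t \<le> f 0 + \<epsilon> * t)" for \<epsilon>
    using assms by (intro eventually_subst) (auto elim: eventually_mono)
  thus ?thesis unfolding right_slope_nonpos_def by simp
qed

lemma ereal_slope_bound_if_dominated:
  assumes "\<forall>\<^sub>F t in at_right 0. F t \<le> ereal (f t)" and "F0 = ereal (f 0)"
    and "right_slope_nonpos f"
  shows "\<forall>\<epsilon>>0. \<forall>\<^sub>F t in at_right 0. F t \<le> F0 + ereal (\<epsilon> * t)"
proof (intro allI impI)
  fix \<epsilon> :: real assume "\<epsilon> > 0"
  with assms(3) have "\<forall>\<^sub>F t in at_right 0. f t \<le> f 0 + \<epsilon> * t"
    unfolding right_slope_nonpos_def by blast
  with assms(1) show "\<forall>\<^sub>F t in at_right 0. F t \<le> F0 + ereal (\<epsilon> * t)"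
    by eventually_elim (use assms(2) in \<open>auto intro: order_trans\<close>)
qed

text \<open>A term \<open>K t ln t\<close> with \<open>K < 0\<close> has infinite right slope at \<open>0\<close>, so it cannot be
  compensated by a differentiable part.\<close>

lemma right_slope_nonpos_xlnx_perturbation:
  assumes g: "(g has_real_derivative g') (at_right 0)"
    and hg: "\<forall>\<^sub>F t in at_right 0. h t = g t + K * (t * ln t)" and h0: "h 0 = g 0"
    and h: "right_slope_nonpos h"
  shows "K \<ge> 0 \<and> (K = 0 \<longrightarrow> g' \<le> 0)"
proof
  show "K \<ge> 0"
  proof (rule ccontr)
    assume "\<not> K \<ge> 0"
    have q: "\<forall>\<^sub>F t in at_right 0. (g t - g 0) / t > g' - 1"
      using g unfolding has_field_derivative_iff by (intro order_tendstoD) auto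
    have "filterlim (\<lambda>t::real. - ln t) at_top (at_right 0)" by real_asymp
    hence "filterlim (\<lambda>t::real. (-K) * (- ln t)) at_top (at_right 0)"
      using \<open>\<not> K \<ge> 0\<close> by (intro filterlim_tendsto_pos_mult_at_top[OF tendsto_const]) auto
    hence l: "\<forall>\<^sub>F t in at_right 0. (-K) * (- ln t) > 2 - g'"
      by (simp add: filterlim_at_top_dense)
    have tp: "\<forall>\<^sub>F t::real in at_right 0. t > 0" by (simp add: eventually_at_right_less)
    have "\<forall>\<^sub>F t in at_right 0. h t \<le> h 0 + 1 * t"
      using h unfolding right_slope_nonpos_def by (meson zero_less_one)
    with q l hg tp have "\<forall>\<^sub>F t in at_right (0::real). False"
    proof eventually_elim
      case (elim t)
      have "g t - g 0 > (g' - 1) * t" using elim by (simp add: field_simps)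
      moreover have "t * ((-K) * (- ln t)) > t * (2 - g')"
        using elim by (intro mult_strict_left_mono) auto
      ultimately have "h t > g 0 + t" using elim by (simp add: algebra_simps)
      thus False using elim h0 by simp
    qed
    thus False by simp
  qed
next
  show "K = 0 \<longrightarrow> g' \<le> 0"
  proof
    assume "K = 0"
    with hg h0 have "right_slope_nonpos h \<longleftrightarrow> right_slope_nonpos g"
      by (intro right_slope_nonpos_cong) auto
    thus "g' \<le> 0" using h right_slope_nonpos_iff_deriv[OF g] by simp
  qed
qed

lemma has_real_derivative_eventually_pos:
  assumes "(g has_real_derivative g') (at_right 0)" and "g 0 > 0"
  shows "\<forall>\<^sub>F t in at_right 0. g t > 0"
proof -
  have "(g \<longlongrightarrow> g 0) (at_right 0)"
    using DERIV_continuous[OF assms(1)] by (simp add: continuous_within)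
  thus ?thesis using assms(2) by (rule order_tendstoD)
qed

lemma eventually_at_right_0_lt_1: "\<forall>\<^sub>F t::real in at_right 0. 0 < t \<and> t < 1"
  by (rule eventually_at_rightI[of 0 1]) auto

lemma powr_tendsto_0_at_right:
  assumes "0 < e"
  shows "((\<lambda>t::real. t powr e) \<longlongrightarrow> 0) (at_right 0)"
proof -
  have "((\<lambda>t::real. t) \<longlongrightarrow> 0) (at_right 0)" by (rule tendsto_ident_at)
  moreover have "\<forall>\<^sub>F t::real in at_right 0. 0 \<le> t"
    by (rule eventually_mono[OF eventually_at_right_less]) simp
  ultimately show ?thesis using tendsto_zero_powrI[of "\<lambda>t. t" _ "\<lambda>_. e" e] assms by simp
qed

lemma has_real_derivative_segment_powr:
  fixes y0 y1 q :: real
  assumes "0 \<le> y0" and "1 < q"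
  shows "((\<lambda>t. (y0 + t * (y1 - y0)) powr q) has_real_derivative q * y0 powr (q - 1) * (y1 - y0))
           (at_right 0)"
proof (cases "y0 = 0")
  case False
  with assms have "y0 > 0" by simp
  hence "((\<lambda>t. (y0 + t * (y1 - y0)) powr q) has_real_derivative
           q * (y0 + 0 * (y1 - y0)) powr (q - 1) * (0 * 0 + 1 * (y1 - y0))) (at 0)"
    by (auto intro!: derivative_eq_intros)
  thus ?thesis by (simp add: has_field_derivative_at_within)
next
  case True
  have "((\<lambda>t::real. y1 powr q * t powr (q - 1)) \<longlongrightarrow> y1 powr q * 0) (at_right 0)"
    using assms by (intro tendsto_mult tendsto_const powr_tendsto_0_at_right) simp
  moreover have "\<forall>\<^sub>F t in at_right 0.
      y1 powr q * t powr (q - 1) = ((t * y1) powr q - 0 powr q) / t"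
    by (rule eventually_at_rightI[of 0 1]) (auto simp: powr_mult powr_diff mult.commute)
  ultimately have "((\<lambda>t. ((t * y1) powr q - 0 powr q) / t) \<longlongrightarrow> 0) (at_right 0)"
    by (simp add: tendsto_cong)
  thus ?thesis using True unfolding has_field_derivative_iff by simp
qed

text \<open>At a corner \<open>y0 = z0 = 0\<close> the product of the two roots behaves like \<open>t ^ (2 s)\<close>,
  which is differentiable with derivative \<open>0\<close> because \<open>2 s > 1\<close>; the two excluded
  configurations are the ones in which exactly one factor starts at \<open>0\<close>.\<close>

lemma has_real_derivative_segment_powr_product:
  fixes y0 y1 z0 z1 w s :: real
  assumes nn: "0 \<le> y0" "0 \<le> y1" "0 \<le> z0" "0 \<le> z1" "0 \<le> w" and s: "0 < s" "2 * s > 1"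
    and not_one_zero: "w > 0 \<Longrightarrow> (y0 = 0 \<longleftrightarrow> z0 = 0)"
  shows "((\<lambda>t. w * (y0 + t * (y1 - y0)) powr s * (z0 + t * (z1 - z0)) powr s) has_real_derivative
          w * s * (y0 powr (s - 1) * (y1 - y0) * z0 powr s + y0 powr s * z0 powr (s - 1) * (z1 - z0)))
          (at_right 0)"
proof (cases "w = 0")
  case False
  with nn have w: "w > 0" by simp
  show ?thesis
  proof (cases "y0 = 0")
    case True
    with not_one_zero w have z0: "z0 = 0" by simp
    have "((\<lambda>t::real. w * (y1 * z1) powr s * t powr (2 * s - 1)) \<longlongrightarrow> w * (y1 * z1) powr s * 0)
            (at_right 0)"
      using s by (intro tendsto_mult tendsto_const powr_tendsto_0_at_right) simp
    moreover have "\<forall>\<^sub>F t in at_right 0. w * (y1 * z1) powr s * t powr (2 * s - 1) =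
        (w * (t * y1) powr s * (t * z1) powr s - w * 0 powr s * 0 powr s) / t"
    proof (rule eventually_at_rightI[of 0 1])
      fix t :: real assume t: "t \<in> {0<..<1}"
      hence "t powr (2 * s - 1) = t powr s * t powr s / t"
        by (simp add: powr_add[symmetric] powr_diff)
      thus "w * (y1 * z1) powr s * t powr (2 * s - 1) =
          (w * (t * y1) powr s * (t * z1) powr s - w * 0 powr s * 0 powr s) / t"
        using s by (simp add: powr_mult)
    qed simp
    ultimately have "((\<lambda>t. (w * (t * y1) powr s * (t * z1) powr s - w * 0 powr s * 0 powr s) / t)
        \<longlongrightarrow> 0) (at_right 0)"
      by (simp add: tendsto_cong)
    thus ?thesis using True z0 unfolding has_field_derivative_iff by simp
  next
    case False
    with nn have "y0 > 0" by simp
    moreover from False not_one_zero w nn have "z0 > 0" by auto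
    ultimately have "((\<lambda>t. w * (y0 + t * (y1 - y0)) powr s * (z0 + t * (z1 - z0)) powr s)
        has_real_derivative
          w * (s * (y0 + 0 * (y1 - y0)) powr (s - 1) * (0 * 0 + 1 * (y1 - y0))) * (z0 + 0 * (z1 - z0)) powr s
          + w * (y0 + 0 * (y1 - y0)) powr s * (s * (z0 + 0 * (z1 - z0)) powr (s - 1) * (0 * 0 + 1 * (z1 - z0))))
        (at 0)"
      by (auto intro!: derivative_eq_intros)
    thus ?thesis by (simp add: has_field_derivative_at_within algebra_simps)
  qed
qed simp

section \<open>Entropy along segments\<close>

text \<open>Along a segment from \<open>y0\<close> to \<open>y1\<close>, the entropy term \<open>y ln y\<close> is split into a part that is
  differentiable from the right at \<open>0\<close> and a multiple of \<open>t ln t\<close>; the singular part is present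
  only when the segment starts at \<open>y0 = 0\<close>.\<close>

definition xlnx_segment :: "real \<Rightarrow> real \<Rightarrow> real \<Rightarrow> real" where
  "xlnx_segment y0 y1 t = (y0 + t * (y1 - y0)) * ln (y0 + t * (y1 - y0))"

definition xlnx_segment_regular :: "real \<Rightarrow> real \<Rightarrow> real \<Rightarrow> real" where
  "xlnx_segment_regular y0 y1 t = (if y0 = 0 then t * (y1 * ln y1) else xlnx_segment y0 y1 t)"

definition xlnx_segment_slope :: "real \<Rightarrow> real \<Rightarrow> real" where
  "xlnx_segment_slope y0 y1 = (if y0 = 0 then y1 * ln y1 else (y1 - y0) * (ln y0 + 1))"

definition xlnx_segment_singular :: "real \<Rightarrow> real \<Rightarrow> real" where
  "xlnx_segment_singular y0 y1 = (if y0 = 0 then y1 else 0)"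

lemma has_real_derivative_xlnx_segment_regular:
  assumes "0 \<le> y0"
  shows "(xlnx_segment_regular y0 y1 has_real_derivative xlnx_segment_slope y0 y1) (at_right 0)"
proof (cases "y0 = 0")
  case True
  have "((\<lambda>t. t * (y1 * ln y1)) has_real_derivative 1 * (y1 * ln y1)) (at_right 0)"
    by (intro derivative_eq_intros) auto
  moreover have "xlnx_segment_regular y0 y1 = (\<lambda>t. t * (y1 * ln y1))"
    using True by (simp add: xlnx_segment_regular_def fun_eq_iff)
  ultimately show ?thesis using True by (simp add: xlnx_segment_slope_def)
next
  case False
  with assms have "y0 > 0" by simp
  hence "((\<lambda>t. (y0 + t * (y1 - y0)) * ln (y0 + t * (y1 - y0))) has_real_derivative
      (y1 - y0) * (ln y0 + 1)) (at 0)"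
    by (auto intro!: derivative_eq_intros simp: field_simps)
  moreover have "xlnx_segment_regular y0 y1 = (\<lambda>t. (y0 + t * (y1 - y0)) * ln (y0 + t * (y1 - y0)))"
    using False by (simp add: xlnx_segment_regular_def xlnx_segment_def fun_eq_iff)
  ultimately show ?thesis using False
    by (simp add: xlnx_segment_slope_def has_field_derivative_at_within)
qed

lemma xlnx_segment_split:
  assumes "0 \<le> y0" "0 \<le> y1" "0 < t"
  shows "xlnx_segment y0 y1 t =
    xlnx_segment_regular y0 y1 t + xlnx_segment_singular y0 y1 * (t * ln t)"
proof (cases "y0 = 0 \<and> y1 \<noteq> 0")
  case True
  with assms show ?thesis
    by (simp add: xlnx_segment_def xlnx_segment_regular_def xlnx_segment_singular_def
        ln_mult algebra_simps)
qed (auto simp: xlnx_segment_def xlnx_segment_regular_def xlnx_segment_singular_def)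

lemma xlnx_segment_regular_0 [simp]: "xlnx_segment_regular y0 y1 0 = xlnx_segment y0 y1 0"
  by (simp add: xlnx_segment_regular_def xlnx_segment_def)

lemma sum_at_indicator:
  assumes "\<forall>k. f k 0 = 0"
  shows "(\<Sum>k\<in>(UNIV::'n::finite set). f k (if k = i then 1 else 0)) = f i 1"
proof -
  have "(\<Sum>k\<in>UNIV. f k (if k = i then 1 else 0)) = (\<Sum>k\<in>UNIV. if k = i then f i 1 else 0)"
    by (intro sum.cong refl) (simp add: assms)
  thus ?thesis by simp
qed

lemma sum_at_indicator2:
  assumes "\<forall>k l. f k l 0 = 0"
  shows "(\<Sum>k\<in>(UNIV::'n::finite set). \<Sum>l\<in>(UNIV::'m::finite set).
            f k l (if k = i \<and> l = j then 1 else 0)) = f i j 1"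
proof -
  have "(\<Sum>l\<in>(UNIV::'m set). f k l (if k = i \<and> l = j then 1 else 0)) = (if k = i then f i j 1 else 0)"
    for k
    using sum_at_indicator[of "f k" j] assms by (cases "k = i") simp_all
  thus ?thesis by simp
qed

lemma sum_xlnx_segment_slope_to_vertex:
  fixes v :: "'n::finite \<Rightarrow> real"
  assumes "(\<Sum>k\<in>UNIV. v k) = 1" and "v i > 0"
  shows "(\<Sum>k\<in>UNIV. xlnx_segment_slope (v k) (if k = i then 1 else 0))
           = ln (v i) - (\<Sum>k\<in>UNIV. v k * ln (v k))"
proof -
  have "xlnx_segment_slope (v k) (if k = i then 1 else 0) =
          (if k = i then 1 else 0) * (ln (v k) + 1) - v k * ln (v k) - v k" for k
    using assms(2) by (cases "v k = 0") (auto simp: xlnx_segment_slope_def algebra_simps)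
  moreover have "(\<Sum>k\<in>UNIV. (if k = i then 1 else 0) * (ln (v k) + 1)) = ln (v i) + 1"
    using sum_at_indicator[of "\<lambda>k y. y * (ln (v k) + 1)" i] by simp
  ultimately show ?thesis using assms(1) by (simp add: sum_subtractf)
qed

lemma sum_xlnx_segment_slope_to_vertex2:
  fixes v :: "'n::finite \<Rightarrow> 'm::finite \<Rightarrow> real"
  assumes "(\<Sum>k\<in>UNIV. \<Sum>l\<in>UNIV. v k l) = 1" and "v i j > 0"
  shows "(\<Sum>k\<in>UNIV. \<Sum>l\<in>UNIV. xlnx_segment_slope (v k l) (if k = i \<and> l = j then 1 else 0))
           = ln (v i j) - (\<Sum>k\<in>UNIV. \<Sum>l\<in>UNIV. v k l * ln (v k l))"
proof -
  have "xlnx_segment_slope (v k l) (if k = i \<and> l = j then 1 else 0) =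
          (if k = i \<and> l = j then 1 else 0) * (ln (v k l) + 1) - v k l * ln (v k l) - v k l" for k l
    using assms(2) by (cases "v k l = 0") (auto simp: xlnx_segment_slope_def algebra_simps)
  moreover have "(\<Sum>k\<in>UNIV. \<Sum>l\<in>UNIV. (if k = i \<and> l = j then 1 else 0) * (ln (v k l) + 1))
                   = ln (v i j) + 1"
    using sum_at_indicator2[of "\<lambda>k l y. y * (ln (v k l) + 1)" i j] by simp
  ultimately show ?thesis using assms(1) by (simp add: sum_subtractf)
qed

lemma continuous_on_xlnx: "continuous_on {0..} (\<lambda>y::real. y * ln y)"
  unfolding continuous_on_def
proof
  fix y :: real assume "y \<in> {0..}"
  show "((\<lambda>y. y * ln y) \<longlongrightarrow> y * ln y) (at y within {0..})"
  proof (cases "y = 0")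
    case True
    have "((\<lambda>y::real. y * ln y) \<longlongrightarrow> 0) (at_right 0)" by real_asymp
    thus ?thesis using True by (simp add: at_within_Ici_at_right)
  next
    case False
    hence "isCont (\<lambda>y. y * ln y) y" by (auto intro!: continuous_intros)
    hence "continuous (at y within {0..}) (\<lambda>y. y * ln y)"
      by (rule continuous_at_imp_continuous_at_within)
    thus ?thesis by (simp add: continuous_within)
  qed
qed

lemma continuous_on_matrix_entry: "continuous_on S (\<lambda>x::real^'n^'m. x$i$j)"
proof -
  have "bounded_linear (\<lambda>x::real^'n^'m. x$i$j)"
    using bounded_linear_compose[OF bounded_linear_vec_nth[of j] bounded_linear_vec_nth[of i]]
    by (simp add: o_def)
  thus ?thesis by (rule linear_continuous_on)
qed

lemma local_max_imp_crit_point: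
  fixes f :: "'a::real_normed_vector \<Rightarrow> ereal"
  assumes lm: "local_max f K p" and "f p \<noteq> \<infinity>"
    and segment: "\<And>q t. q \<in> K \<Longrightarrow> 0 \<le> t \<Longrightarrow> t \<le> 1 \<Longrightarrow> p + t *\<^sub>R (q - p) \<in> K"
  shows "crit_point f K p"
proof -
  obtain e where e: "e > 0" "\<forall>p'\<in>K. dist p' p < e \<longrightarrow> f p' \<le> f p"
    using lm unfolding local_max_def by blast
  have "\<forall>\<^sub>F t in at_right 0. f (p + t *\<^sub>R (q - p)) \<le> f p + ereal (\<epsilon> * t)"
    if q: "q \<in> K" and "\<epsilon> > 0" for q \<epsilon>
  proof -
    define d where "d = min 1 (e / (norm (q - p) + 1))"
    have np: "norm (q - p) + 1 > 0" by (simp add: add_nonneg_pos)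
    hence "d > 0" using e by (simp add: d_def)
    thus ?thesis
    proof (rule eventually_at_rightI[rotated])
      fix t assume t: "t \<in> {0<..<d}"
      hence t1: "0 \<le> t" "t \<le> 1" by (auto simp: d_def)
      have "t * norm (q - p) \<le> t * (norm (q - p) + 1)" using t1 by (simp add: mult_left_mono)
      also have "\<dots> < e" using t np by (simp add: d_def pos_less_divide_eq)
      finally have "dist (p + t *\<^sub>R (q - p)) p < e" using t1 by (simp add: dist_norm)
      hence "f (p + t *\<^sub>R (q - p)) \<le> f p" using e segment[OF q t1] by blast
      also have "f p \<le> f p + ereal (\<epsilon> * t)" using \<open>\<epsilon> > 0\<close> t1 by (simp add: add_increasing2)
      finally show "f (p + t *\<^sub>R (q - p)) \<le> f p + ereal (\<epsilon> * t)" .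
    qed
  qed
  thus ?thesis using lm assms(2) unfolding crit_point_def local_max_def by blast
qed

lemma sum_powr_pos:
  fixes r :: "real^'n"
  assumes "\<forall>i. 0 \<le> r$i" "r \<noteq> 0"
  shows "(\<Sum>i\<in>UNIV. r$i powr e) > 0"
proof -
  obtain i where "r$i \<noteq> 0" using assms(2) by (metis vec_eq_iff zero_index)
  hence "0 < r$i powr e" using assms(1) by simp
  also have "r$i powr e \<le> (\<Sum>i\<in>UNIV. r$i powr e)" by (rule member_le_sum) auto
  finally show ?thesis .
qed

section \<open>The transformation \<open>Tmap\<close>\<close>

lemma matrix_vector_mult_nth: "(A *v x)$i = (\<Sum>j\<in>UNIV. A$i$j * x$j)"
  by (simp add: matrix_vector_mult_def)

lemma vector_matrix_mult_nth: "(x v* A)$j = (\<Sum>i\<in>UNIV. A$i$j * (x$i :: 'a::comm_semiring_1))"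
  by (simp add: vector_matrix_mult_def mult.commute)

lemma inner_matrix_vector_mult_eq_sum:
  "(r::real^'n) \<bullet> (A *v c) = (\<Sum>i\<in>UNIV. \<Sum>j\<in>UNIV. r$i * A$i$j * c$j)"
  by (simp add: inner_vec_def matrix_vector_mult_def sum_distrib_left mult.assoc)

lemma inner_matrix_vector_mult_eq_vector_matrix:
  "(r::real^'n) \<bullet> (A *v c) = (\<Sum>j\<in>UNIV. c$j * (r v* A)$j)"
  unfolding inner_matrix_vector_mult_eq_sum vector_matrix_mult_nth
  by (subst sum.swap) (simp add: sum_distrib_left ac_simps)

definition powr_normalize :: "real \<Rightarrow> real^'n \<Rightarrow> real^'n" where
  "powr_normalize e r = (\<chi> i. r$i powr e / (\<Sum>k\<in>UNIV. r$k powr e))"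

lemma Tmap_eq: "Tmap \<Delta> (r, c) = (powr_normalize (pexp \<Delta>) r, powr_normalize (pexp \<Delta>) c)"
  by (simp add: Tmap_def powr_normalize_def Let_def)

lemma powr_normalize_in_simplex:
  fixes r :: "real^'n"
  assumes "\<forall>i. 0 \<le> r$i" "r \<noteq> 0"
  shows "(\<forall>i. 0 \<le> powr_normalize e r $ i) \<and> (\<Sum>i\<in>UNIV. powr_normalize e r $ i) = 1"
  using sum_powr_pos[OF assms, of e]
  by (simp add: powr_normalize_def sum_divide_distrib[symmetric])

lemma powr_normalize_root:
  fixes r :: "real^'n"
  assumes "\<forall>i. 0 \<le> r$i" "e > 0"
  shows "powr_normalize e r $ i powr (1 / e) = r$i / (\<Sum>k\<in>UNIV. r$k powr e) powr (1 / e)"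
  using assms by (simp add: powr_normalize_def powr_divide powr_powr)

lemma powr_normalize_of_root:
  fixes a :: "real^'n"
  assumes "\<forall>i. 0 \<le> a$i" "(\<Sum>i\<in>UNIV. a$i) = 1" "e > 0"
  shows "powr_normalize e (\<chi> i. a$i powr (1 / e)) = a"
  using assms by (simp add: powr_normalize_def powr_powr vec_eq_iff)

lemma powr_normalize_eq_imp_scaled:
  fixes r r' :: "real^'n"
  assumes r: "\<forall>i. 0 \<le> r$i" "r \<noteq> 0" and r': "\<forall>i. 0 \<le> r'$i" "r' \<noteq> 0" and "e > 0"
    and eq: "powr_normalize e r = powr_normalize e r'"
  shows "\<exists>a>0. r' = a *\<^sub>R r"
proof -
  define S where "S = (\<Sum>k\<in>UNIV. r$k powr e)"
  define S' where "S' = (\<Sum>k\<in>UNIV. r'$k powr e)"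
  have "S > 0" "S' > 0" using sum_powr_pos r r' unfolding S_def S'_def by auto
  have "r'$i = (S' / S) powr (1 / e) * r$i" for i
  proof -
    have "r'$i / S' powr (1 / e) = r$i / S powr (1 / e)"
      using powr_normalize_root[OF r(1) \<open>e > 0\<close>, of i] powr_normalize_root[OF r'(1) \<open>e > 0\<close>, of i] eq
      by (simp add: S_def S'_def)
    thus ?thesis using \<open>S > 0\<close> \<open>S' > 0\<close> by (simp add: powr_divide field_simps)
  qed
  hence "r' = ((S' / S) powr (1 / e)) *\<^sub>R r" by (simp add: vec_eq_iff)
  moreover have "(S' / S) powr (1 / e) > 0" using \<open>S > 0\<close> \<open>S' > 0\<close> by simp
  ultimately show ?thesis by blast
qed

lemma pnorm_eq_sum_powr:
  fixes r :: "real^'n"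
  assumes "\<forall>i. 0 \<le> r$i"
  shows "pnorm e r = (\<Sum>i\<in>UNIV. r$i powr e) powr (1 / e)"
  using assms by (simp add: pnorm_def)

definition inv_pexp :: "nat \<Rightarrow> real" where
  "inv_pexp \<Delta> = (real \<Delta> - 1) / real \<Delta>"

locale spin_system =
  fixes B :: "real^'q^'q" and D :: nat
  assumes three_le_D: "3 \<le> D" and B_nonneg: "\<And>i j. 0 \<le> B$i$j"
begin

abbreviation "p \<equiv> pexp D"
abbreviation "s \<equiv> inv_pexp D"

lemma D_gt_2: "real D > 2" using three_le_D by simp
lemma p_gt_1: "p > 1" using D_gt_2 by (simp add: pexp_def)
lemma s_pos: "s > 0" using D_gt_2 by (simp add: inv_pexp_def)
lemma two_s_gt_1: "2 * s > 1" using D_gt_2 by (simp add: inv_pexp_def field_simps)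
lemma s_eq_inverse_p: "s = 1 / p" using D_gt_2 by (simp add: inv_pexp_def pexp_def)
lemma s_mult_p_minus_1: "s * (p - 1) = 1 - s"
  using D_gt_2 by (simp add: inv_pexp_def pexp_def field_simps)
lemma D_minus_1_eq: "real D - 1 = real D * s" using D_gt_2 by (simp add: inv_pexp_def)
lemma real_D_minus_1: "real (D - 1) = real D - 1" using three_le_D by simp
lemma p_minus_1_mult_D_minus_1: "(p - 1) * real (D - 1) = 1"
  using D_gt_2 by (simp add: pexp_def real_D_minus_1 field_simps)

lemma Tmap_image: "Tmap D ` (PhiDom :: ((real^'q) \<times> (real^'q)) set) = SimDom"
proof
  show "Tmap D ` PhiDom \<subseteq> (SimDom :: ((real^'q) \<times> (real^'q)) set)"
    using powr_normalize_in_simplex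
    by (fastforce simp: Tmap_eq PhiDom_def SimDom_def)
next
  show "(SimDom :: ((real^'q) \<times> (real^'q)) set) \<subseteq> Tmap D ` PhiDom"
  proof
    fix x :: "(real^'q) \<times> (real^'q)" assume "x \<in> SimDom"
    then obtain a b where x: "x = (a, b)" and a: "\<forall>i. 0 \<le> a$i" "(\<Sum>i\<in>UNIV. a$i) = 1"
      and b: "\<forall>j. 0 \<le> b$j" "(\<Sum>j\<in>UNIV. b$j) = 1"
      unfolding SimDom_def by auto
    define r :: "real^'q" where "r = (\<chi> i. a$i powr (1 / p))"
    define c :: "real^'q" where "c = (\<chi> j. b$j powr (1 / p))"
    have "\<exists>i. a$i \<noteq> 0" "\<exists>j. b$j \<noteq> 0"
      using a(2) b(2) by (metis (mono_tags) sum.neutral zero_neq_one)+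
    hence "r \<noteq> 0" "c \<noteq> 0"
      using a(1) b(1) by (auto simp: r_def c_def vec_eq_iff)
    hence "(r, c) \<in> PhiDom" unfolding PhiDom_def r_def c_def by auto
    moreover have "Tmap D (r, c) = x"
      using powr_normalize_of_root[OF a] powr_normalize_of_root[OF b] p_gt_1
      by (simp add: Tmap_eq x r_def c_def)
    ultimately show "x \<in> Tmap D ` PhiDom" by force
  qed
qed

lemma Tmap_eq_imp_scaled:
  assumes "(r, c) \<in> PhiDom" "(r', c') \<in> PhiDom" "Tmap D (r, c) = Tmap D (r', c')"
  shows "\<exists>a>0. \<exists>b>0. r' = a *\<^sub>R r \<and> c' = b *\<^sub>R c"
  using powr_normalize_eq_imp_scaled[of r r' p] powr_normalize_eq_imp_scaled[of c c' p] assms p_gt_1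
  unfolding PhiDom_def Tmap_eq by auto

definition pmass :: "real^'q \<Rightarrow> real" where
  "pmass r = (\<Sum>i\<in>UNIV. r$i powr p)"

lemma pmass_pos: "\<forall>i. 0 \<le> r$i \<Longrightarrow> r \<noteq> 0 \<Longrightarrow> pmass r > 0"
  unfolding pmass_def by (rule sum_powr_pos)

lemma sum_mult_powr_p_minus_1: "\<forall>i. 0 \<le> r$i \<Longrightarrow> (\<Sum>i\<in>UNIV. r$i * r$i powr (p - 1)) = pmass r"
  unfolding pmass_def by (intro sum.cong refl) (simp add: powr_mult_base)

definition Phi_formula :: "real^'q \<Rightarrow> real^'q \<Rightarrow> real" where
  "Phi_formula r c = real D * (ln (r \<bullet> (B *v c)) - s * ln (pmass r) - s * ln (pmass c))"

lemma Phi_eq_Phi_formula: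
  assumes "(r, c) \<in> PhiDom"
  shows "Phi B D (r, c) = (if r \<bullet> (B *v c) > 0 then ereal (Phi_formula r c) else -\<infinity>)"
proof -
  have r: "\<forall>i. 0 \<le> r$i" "r \<noteq> 0" and c: "\<forall>i. 0 \<le> c$i" "c \<noteq> 0"
    using assms by (auto simp: PhiDom_def)
  have "pmass r > 0" "pmass c > 0" using pmass_pos r c by auto
  moreover have "r \<bullet> (B *v c) \<ge> 0"
    unfolding inner_matrix_vector_mult_eq_sum using r(1) c(1) B_nonneg by (simp add: sum_nonneg)
  moreover have "pnorm p r = pmass r powr s" "pnorm p c = pmass c powr s"
    using pnorm_eq_sum_powr r(1) c(1) by (simp_all add: pmass_def s_eq_inverse_p)
  ultimately show ?thesis
    by (simp add: Phi_def Phi_formula_def zero_less_divide_iff ln_div ln_mult ln_powr)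
qed

lemma PhiDom_segment:
  fixes r c r' c' :: "real^'q"
  assumes "(r, c) \<in> PhiDom" "(r', c') \<in> PhiDom" "0 \<le> t" "t \<le> 1"
  shows "(r + t *\<^sub>R (r' - r), c + t *\<^sub>R (c' - c)) \<in> PhiDom"
proof -
  have *: "(\<forall>i. 0 \<le> (v + t *\<^sub>R (v' - v))$i) \<and> v + t *\<^sub>R (v' - v) \<noteq> 0"
    if v: "\<forall>i. 0 \<le> v$i" "v \<noteq> 0" and v': "\<forall>i. 0 \<le> v'$i" "v' \<noteq> 0" for v v' :: "real^'q"
  proof
    have e: "(v + t *\<^sub>R (v' - v))$i = (1 - t) * v$i + t * v'$i" for i by (simp add: algebra_simps)
    show "\<forall>i. 0 \<le> (v + t *\<^sub>R (v' - v))$i" unfolding e using v v' assms by simp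
    show "v + t *\<^sub>R (v' - v) \<noteq> 0"
    proof (cases "t = 1")
      case False
      obtain i where "v$i \<noteq> 0" using v(2) by (metis vec_eq_iff zero_index)
      hence "(1 - t) * v$i > 0" using v(1) False assms by (simp add: order_le_neq_trans)
      moreover have "t * v'$i \<ge> 0" using v' assms by simp
      ultimately have "(v + t *\<^sub>R (v' - v))$i > 0" unfolding e by (rule add_pos_nonneg)
      thus ?thesis by (metis less_irrefl zero_index)
    qed (use v' in simp)
  qed
  show ?thesis using *[of r r'] *[of c c'] assms by (auto simp: PhiDom_def)
qed

end

section \<open>Critical points of \<open>Phi\<close>\<close>

context spin_system begin

text \<open>Since \<open>s p = 1\<close>, these are the partial derivatives of \<open>Phi / D\<close> in \<open>r\<close> and in \<open>c\<close>.\<close>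

definition grad_r :: "real^'q \<Rightarrow> real^'q \<Rightarrow> 'q \<Rightarrow> real" where
  "grad_r r c i = (B *v c)$i / (r \<bullet> (B *v c)) - r$i powr (p - 1) / pmass r"

definition grad_c :: "real^'q \<Rightarrow> real^'q \<Rightarrow> 'q \<Rightarrow> real" where
  "grad_c r c j = (r v* B)$j / (r \<bullet> (B *v c)) - c$j powr (p - 1) / pmass c"

definition root_fixpoint :: "real^'q \<Rightarrow> real^'q \<Rightarrow> bool" where
  "root_fixpoint r c \<longleftrightarrow> (\<exists>\<kappa>>0. \<forall>i. (B *v c)$i = \<kappa> * r$i powr (p - 1))
                        \<and> (\<exists>\<mu>>0. \<forall>j. (r v* B)$j = \<mu> * c$j powr (p - 1))"

lemma matrix_vector_mult_nonneg: "\<forall>j. 0 \<le> c$j \<Longrightarrow> 0 \<le> (B *v c)$i"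
  unfolding matrix_vector_mult_nth using B_nonneg by (intro sum_nonneg) auto

lemma vector_matrix_mult_nonneg: "\<forall>i. 0 \<le> r$i \<Longrightarrow> 0 \<le> (r v* B)$j"
  unfolding vector_matrix_mult_nth using B_nonneg by (intro sum_nonneg) auto

lemma bilinear_segment_deriv:
  "((\<lambda>t. (r + t *\<^sub>R (r' - r)) \<bullet> (B *v (c + t *\<^sub>R (c' - c)))) has_real_derivative
     (\<Sum>i\<in>UNIV. (r'$i - r$i) * (B *v c)$i) + (\<Sum>j\<in>UNIV. (c'$j - c$j) * (r v* B)$j)) (at_right 0)"
proof -
  have "((\<lambda>t. \<Sum>i\<in>UNIV. \<Sum>j\<in>UNIV. (r$i + t * (r'$i - r$i)) * B$i$j * (c$j + t * (c'$j - c$j)))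
     has_real_derivative (\<Sum>i\<in>UNIV. \<Sum>j\<in>UNIV.
        (r'$i - r$i) * B$i$j * c$j + r$i * B$i$j * (c'$j - c$j))) (at 0)"
    by (intro DERIV_sum) (auto intro!: derivative_eq_intros simp: algebra_simps)
  moreover have "(\<Sum>i\<in>UNIV. \<Sum>j\<in>UNIV. r$i * B$i$j * (c'$j - c$j))
                   = (\<Sum>j\<in>UNIV. (c'$j - c$j) * (r v* B)$j)"
    by (subst sum.swap) (simp add: vector_matrix_mult_nth sum_distrib_left ac_simps)
  ultimately show ?thesis
    by (simp add: inner_matrix_vector_mult_eq_sum matrix_vector_mult_nth sum.distrib
        sum_distrib_left mult.assoc has_field_derivative_at_within)
qed

lemma pmass_segment_deriv:
  assumes "\<forall>i. 0 \<le> r$i"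
  shows "((\<lambda>t. pmass (r + t *\<^sub>R (r' - r))) has_real_derivative
     (\<Sum>i\<in>UNIV. p * r$i powr (p - 1) * (r'$i - r$i))) (at_right 0)"
  unfolding pmass_def using assms p_gt_1
  by (simp add: algebra_simps)
     (intro DERIV_sum has_real_derivative_segment_powr[of "r$i" p "r'$i" for i, simplified algebra_simps];
      simp)

text \<open>Euler's relation for the \<open>0\<close>-homogeneous function \<open>Phi\<close>.\<close>

lemma sum_grad_r_mult:
  assumes "\<forall>i. 0 \<le> r$i" "r \<noteq> 0" "r \<bullet> (B *v c) > 0"
  shows "(\<Sum>i\<in>UNIV. grad_r r c i * r$i) = 0"
proof -
  have "(\<Sum>i\<in>UNIV. grad_r r c i * r$i) =
          (\<Sum>i\<in>UNIV. r$i * (B *v c)$i) / (r \<bullet> (B *v c))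
          - (\<Sum>i\<in>UNIV. r$i * r$i powr (p - 1)) / pmass r"
    by (simp add: grad_r_def algebra_simps sum_subtractf sum_divide_distrib)
  thus ?thesis
    using assms pmass_pos[OF assms(1,2)] by (simp add: sum_mult_powr_p_minus_1 inner_vec_def)
qed

lemma sum_grad_c_mult:
  assumes "\<forall>j. 0 \<le> c$j" "c \<noteq> 0" "r \<bullet> (B *v c) > 0"
  shows "(\<Sum>j\<in>UNIV. grad_c r c j * c$j) = 0"
proof -
  have "(\<Sum>j\<in>UNIV. grad_c r c j * c$j) =
          (\<Sum>j\<in>UNIV. c$j * (r v* B)$j) / (r \<bullet> (B *v c))
          - (\<Sum>j\<in>UNIV. c$j * c$j powr (p - 1)) / pmass c"
    by (simp add: grad_c_def algebra_simps sum_subtractf sum_divide_distrib)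
  thus ?thesis
    using assms pmass_pos[OF assms(1,2)]
    by (simp add: sum_mult_powr_p_minus_1 inner_matrix_vector_mult_eq_vector_matrix[symmetric])
qed

lemma Phi_formula_segment_deriv:
  fixes r c r' c' :: "real^'q"
  assumes rc: "(r, c) \<in> PhiDom" and N: "r \<bullet> (B *v c) > 0"
  shows "((\<lambda>t. Phi_formula (r + t *\<^sub>R (r' - r)) (c + t *\<^sub>R (c' - c))) has_real_derivative
           real D * ((\<Sum>i\<in>UNIV. grad_r r c i * r'$i) + (\<Sum>j\<in>UNIV. grad_c r c j * c'$j))) (at_right 0)"
proof -
  have r: "\<forall>i. 0 \<le> r$i" "r \<noteq> 0" and c: "\<forall>j. 0 \<le> c$j" "c \<noteq> 0"
    using rc by (auto simp: PhiDom_def)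
  have Sr: "pmass r > 0" and Sc: "pmass c > 0" using pmass_pos r c by auto
  define N where "N t = (r + t *\<^sub>R (r' - r)) \<bullet> (B *v (c + t *\<^sub>R (c' - c)))" for t
  have dN: "(N has_real_derivative
      (\<Sum>i\<in>UNIV. (r'$i - r$i) * (B *v c)$i) + (\<Sum>j\<in>UNIV. (c'$j - c$j) * (r v* B)$j)) (at_right 0)"
    unfolding N_def by (rule bilinear_segment_deriv)
  define f' where "f' = real D *
          (((\<Sum>i\<in>UNIV. (r'$i - r$i) * (B *v c)$i) + (\<Sum>j\<in>UNIV. (c'$j - c$j) * (r v* B)$j)) / N 0
           - s * ((\<Sum>i\<in>UNIV. p * r$i powr (p - 1) * (r'$i - r$i)) / pmass r)
           - s * ((\<Sum>j\<in>UNIV. p * c$j powr (p - 1) * (c'$j - c$j)) / pmass c))"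
  have "((\<lambda>t. Phi_formula (r + t *\<^sub>R (r' - r)) (c + t *\<^sub>R (c' - c))) has_real_derivative f') (at_right 0)"
    unfolding Phi_formula_def N_def[symmetric] f'_def using N Sr Sc
    by (auto intro!: derivative_eq_intros dN pmass_segment_deriv r(1) c(1) simp: N_def[of 0] ac_simps)
  moreover have "f' = real D * ((\<Sum>i\<in>UNIV. grad_r r c i * (r'$i - r$i))
                               + (\<Sum>j\<in>UNIV. grad_c r c j * (c'$j - c$j)))"
  proof -
    have "grad_r r c i * (r'$i - r$i) = (r'$i - r$i) * (B *v c)$i / N 0
            - s * (p * r$i powr (p - 1) * (r'$i - r$i) / pmass r)" for i
      using p_gt_1 N Sr by (simp add: s_eq_inverse_p grad_r_def N_def field_simps)
    moreover have "grad_c r c j * (c'$j - c$j) = (c'$j - c$j) * (r v* B)$j / N 0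
            - s * (p * c$j powr (p - 1) * (c'$j - c$j) / pmass c)" for j
      using p_gt_1 N Sc by (simp add: s_eq_inverse_p grad_c_def N_def field_simps)
    ultimately show ?thesis
      by (simp add: f'_def sum_subtractf sum_divide_distrib sum_distrib_left add_divide_distrib)
  qed
  also have "\<dots> = real D * ((\<Sum>i\<in>UNIV. grad_r r c i * r'$i) + (\<Sum>j\<in>UNIV. grad_c r c j * c'$j))"
    using sum_grad_r_mult[OF r N] sum_grad_c_mult[OF c N]
    by (simp add: right_diff_distrib sum_subtractf)
  finally show ?thesis by simp
qed

lemma Phi_segment_slope_iff:
  fixes r c r' c' :: "real^'q"
  assumes rc: "(r, c) \<in> PhiDom" and N: "r \<bullet> (B *v c) > 0" and rc': "(r', c') \<in> PhiDom"
  shows "(\<forall>\<epsilon>>0. \<forall>\<^sub>F t in at_right 0.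
            Phi B D ((r, c) + t *\<^sub>R ((r', c') - (r, c))) \<le> Phi B D (r, c) + ereal (\<epsilon> * t))
         \<longleftrightarrow> (\<Sum>i\<in>UNIV. grad_r r c i * r'$i) + (\<Sum>j\<in>UNIV. grad_c r c j * c'$j) \<le> 0"
proof -
  define f where "f t = Phi_formula (r + t *\<^sub>R (r' - r)) (c + t *\<^sub>R (c' - c))" for t
  have "\<forall>\<^sub>F t in at_right 0. (r + t *\<^sub>R (r' - r)) \<bullet> (B *v (c + t *\<^sub>R (c' - c))) > 0"
    using has_real_derivative_eventually_pos[OF bilinear_segment_deriv] N by simp
  hence "\<forall>\<^sub>F t in at_right 0. Phi B D ((r, c) + t *\<^sub>R ((r', c') - (r, c))) = ereal (f t)"
    using eventually_at_right_0_lt_1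
  proof eventually_elim
    case (elim t)
    with PhiDom_segment[OF rc rc', of t] Phi_eq_Phi_formula show ?case by (simp add: f_def)
  qed
  moreover have "Phi B D (r, c) = ereal (f 0)" using Phi_eq_Phi_formula[OF rc] N by (simp add: f_def)
  ultimately have "(\<forall>\<epsilon>>0. \<forall>\<^sub>F t in at_right 0.
            Phi B D ((r, c) + t *\<^sub>R ((r', c') - (r, c))) \<le> Phi B D (r, c) + ereal (\<epsilon> * t))
         \<longleftrightarrow> right_slope_nonpos f"
    by (rule ereal_slope_bound_iff_right_slope_nonpos)
  also have "\<dots> \<longleftrightarrow> (\<Sum>i\<in>UNIV. grad_r r c i * r'$i) + (\<Sum>j\<in>UNIV. grad_c r c j * c'$j) \<le> 0"
    using right_slope_nonpos_iff_deriv[OF Phi_formula_segment_deriv[OF rc N, of r' c', folded f_def]] D_gt_2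
    by (simp add: mult_le_0_iff)
  finally show ?thesis .
qed

lemma PhiDom_add_axis:
  fixes i :: 'q
  assumes "(r, c) \<in> PhiDom"
  shows "(r + axis i 1, c) \<in> PhiDom" "(r, c + axis i 1) \<in> PhiDom"
proof -
  have *: "(\<forall>k. 0 \<le> (v + axis i 1)$k) \<and> v + axis i 1 \<noteq> 0" if "\<forall>k. 0 \<le> v$k" for v :: "real^'q"
  proof
    show "\<forall>k. 0 \<le> (v + axis i 1)$k" using that by (simp add: axis_def)
    have "(v + axis i 1)$i > 0" using that by (simp add: axis_def add_nonneg_pos)
    thus "v + axis i 1 \<noteq> 0" by (metis less_irrefl zero_index)
  qed
  show "(r + axis i 1, c) \<in> PhiDom" "(r, c + axis i 1) \<in> PhiDom"
    using assms *[of r] *[of c] by (auto simp: PhiDom_def)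
qed

lemma grad_pairing_nonpos_iff:
  fixes r c :: "real^'q"
  assumes rc: "(r, c) \<in> PhiDom" and N: "r \<bullet> (B *v c) > 0"
  shows "(\<forall>r' c'. (r', c') \<in> PhiDom \<longrightarrow>
            (\<Sum>i\<in>UNIV. grad_r r c i * r'$i) + (\<Sum>j\<in>UNIV. grad_c r c j * c'$j) \<le> 0)
         \<longleftrightarrow> (\<forall>i. grad_r r c i \<le> 0) \<and> (\<forall>j. grad_c r c j \<le> 0)"
proof
  assume H: "\<forall>r' c'. (r', c') \<in> PhiDom \<longrightarrow>
      (\<Sum>i\<in>UNIV. grad_r r c i * r'$i) + (\<Sum>j\<in>UNIV. grad_c r c j * c'$j) \<le> 0"
  have r: "\<forall>i. 0 \<le> r$i" "r \<noteq> 0" and c: "\<forall>j. 0 \<le> c$j" "c \<noteq> 0"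
    using rc by (auto simp: PhiDom_def)
  have sum_axis: "(\<Sum>k\<in>UNIV. f k * axis i (1::real) $ k) = f i" for f :: "'q \<Rightarrow> real" and i
    by (simp add: axis_def if_distrib[of "\<lambda>x. f _ * x"] cong: if_cong)
  have "grad_r r c i \<le> 0" for i
    using H[rule_format, OF PhiDom_add_axis(1)[OF rc, of i]]
      sum_grad_r_mult[OF r N] sum_grad_c_mult[OF c N]
    by (simp add: distrib_left sum.distrib sum_axis)
  moreover have "grad_c r c j \<le> 0" for j
    using H[rule_format, OF PhiDom_add_axis(2)[OF rc, of j]]
      sum_grad_r_mult[OF r N] sum_grad_c_mult[OF c N]
    by (simp add: distrib_left sum.distrib sum_axis)
  ultimately show "(\<forall>i. grad_r r c i \<le> 0) \<and> (\<forall>j. grad_c r c j \<le> 0)" by blast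
next
  assume "(\<forall>i. grad_r r c i \<le> 0) \<and> (\<forall>j. grad_c r c j \<le> 0)"
  thus "\<forall>r' c'. (r', c') \<in> PhiDom \<longrightarrow>
      (\<Sum>i\<in>UNIV. grad_r r c i * r'$i) + (\<Sum>j\<in>UNIV. grad_c r c j * c'$j) \<le> 0"
    by (auto simp: PhiDom_def intro!: add_nonpos_nonpos sum_nonpos mult_nonpos_nonneg)
qed

lemma crit_point_Phi_iff_grad_nonpos:
  fixes r c :: "real^'q"
  assumes rc: "(r, c) \<in> PhiDom"
  shows "crit_point (Phi B D) PhiDom (r, c) \<longleftrightarrow>
           r \<bullet> (B *v c) > 0 \<and> (\<forall>i. grad_r r c i \<le> 0) \<and> (\<forall>j. grad_c r c j \<le> 0)"
proof (cases "r \<bullet> (B *v c) > 0")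
  case True
  have "crit_point (Phi B D) PhiDom (r, c) \<longleftrightarrow> (\<forall>r' c'. (r', c') \<in> PhiDom \<longrightarrow>
          (\<Sum>i\<in>UNIV. grad_r r c i * r'$i) + (\<Sum>j\<in>UNIV. grad_c r c j * c'$j) \<le> 0)"
    unfolding crit_point_def using rc True Phi_eq_Phi_formula[OF rc] Phi_segment_slope_iff[OF rc True]
    by (auto simp del: scaleR_Pair)
  thus ?thesis using grad_pairing_nonpos_iff[OF rc True] True by simp
qed (use Phi_eq_Phi_formula[OF rc] in \<open>simp add: crit_point_def\<close>)

text \<open>The Karush-Kuhn-Tucker conditions: by Euler's relation every \<open>grad_r r c i * r$i\<close> vanishes,
  so \<open>grad_r r c i = 0\<close> wherever \<open>r$i > 0\<close>, while \<open>r$i = 0\<close> and \<open>grad_r r c i \<le> 0\<close>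
  force \<open>(B *v c)$i = 0\<close>.\<close>

lemma grad_nonpos_imp_root_fixpoint:
  fixes r c :: "real^'q"
  assumes rc: "(r, c) \<in> PhiDom" and N: "r \<bullet> (B *v c) > 0"
    and gr: "\<forall>i. grad_r r c i \<le> 0" and gc: "\<forall>j. grad_c r c j \<le> 0"
  shows "root_fixpoint r c"
proof -
  have r: "\<forall>i. 0 \<le> r$i" "r \<noteq> 0" and c: "\<forall>j. 0 \<le> c$j" "c \<noteq> 0"
    using rc by (auto simp: PhiDom_def)
  have Sr: "pmass r > 0" and Sc: "pmass c > 0" using pmass_pos r c by auto
  have "grad_r r c i * r$i = 0" for i
    using sum_grad_r_mult[OF r N] gr r(1)
      sum_nonneg_eq_0_iff[of UNIV "\<lambda>i. - (grad_r r c i * r$i)"]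
    by (simp add: sum_negf mult_nonpos_nonneg)
  hence "(B *v c)$i = (r \<bullet> (B *v c) / pmass r) * r$i powr (p - 1)" for i
    using gr[rule_format, of i] matrix_vector_mult_nonneg[OF c(1), of i] N Sr
    by (cases "r$i = 0") (auto simp: grad_r_def field_simps divide_le_0_iff)
  moreover have "grad_c r c j * c$j = 0" for j
    using sum_grad_c_mult[OF c N] gc c(1)
      sum_nonneg_eq_0_iff[of UNIV "\<lambda>j. - (grad_c r c j * c$j)"]
    by (simp add: sum_negf mult_nonpos_nonneg)
  hence "(r v* B)$j = (r \<bullet> (B *v c) / pmass c) * c$j powr (p - 1)" for j
    using gc[rule_format, of j] vector_matrix_mult_nonneg[OF r(1), of j] N Sc
    by (cases "c$j = 0") (auto simp: grad_c_def field_simps divide_le_0_iff)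
  ultimately show ?thesis unfolding root_fixpoint_def using N Sr Sc by (meson divide_pos_pos)
qed

lemma root_fixpoint_imp_grad_zero:
  fixes r c :: "real^'q"
  assumes rc: "(r, c) \<in> PhiDom" and "root_fixpoint r c"
  shows "r \<bullet> (B *v c) > 0 \<and> (\<forall>i. grad_r r c i = 0) \<and> (\<forall>j. grad_c r c j = 0)"
proof -
  have r: "\<forall>i. 0 \<le> r$i" "r \<noteq> 0" and c: "\<forall>j. 0 \<le> c$j" "c \<noteq> 0"
    using rc by (auto simp: PhiDom_def)
  have Sr: "pmass r > 0" and Sc: "pmass c > 0" using pmass_pos r c by auto
  obtain \<kappa> \<mu> where k: "\<kappa> > 0" "\<forall>i. (B *v c)$i = \<kappa> * r$i powr (p - 1)"
    and m: "\<mu> > 0" "\<forall>j. (r v* B)$j = \<mu> * c$j powr (p - 1)"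
    using assms(2) unfolding root_fixpoint_def by blast
  have N1: "r \<bullet> (B *v c) = \<kappa> * pmass r"
    using k(2) by (simp add: inner_vec_def sum_mult_powr_p_minus_1[OF r(1), symmetric]
        sum_distrib_left ac_simps)
  have N2: "r \<bullet> (B *v c) = \<mu> * pmass c"
    using m(2) by (simp add: inner_matrix_vector_mult_eq_vector_matrix
        sum_mult_powr_p_minus_1[OF c(1), symmetric] sum_distrib_left ac_simps)
  have "grad_r r c i = 0" for i using k Sr by (simp add: grad_r_def N1)
  moreover have "grad_c r c j = 0" for j using m Sc by (simp add: grad_c_def N2)
  ultimately show ?thesis using k Sr N1 by simp
qed

lemma crit_point_Phi_iff_root_fixpoint:
  assumes "(r, c) \<in> PhiDom"
  shows "crit_point (Phi B D) PhiDom (r, c) \<longleftrightarrow> root_fixpoint r c"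
  using crit_point_Phi_iff_grad_nonpos[OF assms] grad_nonpos_imp_root_fixpoint[OF assms]
    root_fixpoint_imp_grad_zero[OF assms]
  by auto

lemma pow_D_minus_1_eq_imp_powr:
  assumes "0 \<le> y" "0 \<le> x" "y ^ (D - 1) = k * x"
  shows "y = k powr (p - 1) * x powr (p - 1)"
proof -
  have "y = y powr (real (D - 1) * (p - 1))"
    using p_minus_1_mult_D_minus_1 assms(1) by (simp only: mult.commute powr_one)
  also have "\<dots> = (y ^ (D - 1)) powr (p - 1)"
    using assms(1) three_le_D by (simp only: powr_powr[symmetric] powr_realpow')
  finally show ?thesis using assms(3) by (simp add: powr_mult)
qed

lemma powr_eq_imp_pow_D_minus_1:
  assumes "0 \<le> x" "0 < \<kappa>" "y = \<kappa> * x powr (p - 1)"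
  shows "y ^ (D - 1) = \<kappa> powr real (D - 1) * x"
proof -
  have "y ^ (D - 1) = y powr real (D - 1)"
    using powr_realpow'[of y "D - 1"] assms three_le_D by simp
  also have "\<dots> = \<kappa> powr real (D - 1) * (x powr (p - 1)) powr real (D - 1)"
    using assms by (simp add: powr_mult)
  also have "(x powr (p - 1)) powr real (D - 1) = x"
    using p_minus_1_mult_D_minus_1 assms(1) by (simp only: powr_powr powr_one)
  finally show ?thesis .
qed

lemma tree_fixpoint_iff_root_fixpoint:
  fixes r c :: "real^'q"
  assumes r: "\<forall>i. 0 \<le> r$i" and c: "\<forall>j. 0 \<le> c$j"
  shows "tree_fixpoint B D r c \<longleftrightarrow> root_fixpoint r c"
proof
  assume "tree_fixpoint B D r c"
  then obtain k \<mu> where k: "k > 0" "\<forall>i. ((B *v c)$i) ^ (D - 1) = k * r$i"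
    and m: "\<mu> > 0" "\<forall>j. ((r v* B)$j) ^ (D - 1) = \<mu> * c$j"
    unfolding tree_fixpoint_def matrix_vector_mult_nth vector_matrix_mult_nth by blast
  have "\<forall>i. (B *v c)$i = k powr (p - 1) * r$i powr (p - 1)"
    using pow_D_minus_1_eq_imp_powr[OF matrix_vector_mult_nonneg[OF c] r[rule_format] k(2)[rule_format]]
    by blast
  moreover have "\<forall>j. (r v* B)$j = \<mu> powr (p - 1) * c$j powr (p - 1)"
    using pow_D_minus_1_eq_imp_powr[OF vector_matrix_mult_nonneg[OF r] c[rule_format] m(2)[rule_format]]
    by blast
  moreover have "k powr (p - 1) > 0" "\<mu> powr (p - 1) > 0" using k m by auto
  ultimately show "root_fixpoint r c" unfolding root_fixpoint_def by blast
next
  assume "root_fixpoint r c"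
  then obtain \<kappa> \<mu> where k: "\<kappa> > 0" "\<forall>i. (B *v c)$i = \<kappa> * r$i powr (p - 1)"
    and m: "\<mu> > 0" "\<forall>j. (r v* B)$j = \<mu> * c$j powr (p - 1)"
    unfolding root_fixpoint_def by blast
  have "\<forall>i. ((B *v c)$i) ^ (D - 1) = \<kappa> powr real (D - 1) * r$i"
    using powr_eq_imp_pow_D_minus_1[OF r[rule_format] k(1) k(2)[rule_format]] by blast
  moreover have "\<forall>j. ((r v* B)$j) ^ (D - 1) = \<mu> powr real (D - 1) * c$j"
    using powr_eq_imp_pow_D_minus_1[OF c[rule_format] m(1) m(2)[rule_format]] by blast
  moreover have "\<kappa> powr real (D - 1) > 0" "\<mu> powr real (D - 1) > 0" using k m by auto
  ultimately show "tree_fixpoint B D r c"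
    unfolding tree_fixpoint_def matrix_vector_mult_nth[symmetric] vector_matrix_mult_nth[symmetric]
    by blast
qed

definition root_vec :: "real^'q \<Rightarrow> real^'q" where
  "root_vec a = (\<chi> i. a$i powr s)"

definition root_form :: "real^'q \<Rightarrow> real^'q \<Rightarrow> real" where
  "root_form a b = (\<Sum>i\<in>UNIV. \<Sum>j\<in>UNIV. B$i$j * a$i powr s * b$j powr s)"

lemma root_fixpoint_scaleR:
  assumes "root_fixpoint r c" "a > 0" "b > 0"
  shows "root_fixpoint (a *\<^sub>R r) (b *\<^sub>R c)"
proof -
  obtain \<kappa> \<mu> where k: "\<kappa> > 0" "\<forall>i. (B *v c)$i = \<kappa> * r$i powr (p - 1)"
    and m: "\<mu> > 0" "\<forall>j. (r v* B)$j = \<mu> * c$j powr (p - 1)"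
    using assms(1) unfolding root_fixpoint_def by blast
  have "\<forall>i. (B *v (b *\<^sub>R c))$i = (b * \<kappa> / a powr (p - 1)) * (a *\<^sub>R r)$i powr (p - 1)"
    using k assms by (simp add: matrix_vector_mult_scaleR powr_mult)
  moreover have "\<forall>j. ((a *\<^sub>R r) v* B)$j = (a * \<mu> / b powr (p - 1)) * (b *\<^sub>R c)$j powr (p - 1)"
    using m assms by (simp add: scaleR_vector_matrix_assoc powr_mult)
  moreover have "b * \<kappa> / a powr (p - 1) > 0" "a * \<mu> / b powr (p - 1) > 0" using k m assms by auto
  ultimately show ?thesis unfolding root_fixpoint_def by blast
qed

lemma root_fixpoint_scaleR_iff:
  assumes "a > 0" "b > 0"
  shows "root_fixpoint (a *\<^sub>R r) (b *\<^sub>R c) \<longleftrightarrow> root_fixpoint r c"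
  using root_fixpoint_scaleR[OF _ assms] root_fixpoint_scaleR[of "a *\<^sub>R r" "b *\<^sub>R c" "1/a" "1/b"] assms
  by auto

lemma root_vec_Tmap:
  assumes "(r, c) \<in> PhiDom"
  shows "root_vec (fst (Tmap D (r, c))) = (1 / pnorm p r) *\<^sub>R r"
    and "root_vec (snd (Tmap D (r, c))) = (1 / pnorm p c) *\<^sub>R c"
  using assms powr_normalize_root[of r p] powr_normalize_root[of c p] pnorm_eq_sum_powr[of r p]
    pnorm_eq_sum_powr[of c p] p_gt_1
  by (auto simp: Tmap_eq root_vec_def PhiDom_def vec_eq_iff s_eq_inverse_p)

lemma root_fixpoint_iff_Tmap:
  assumes "(r, c) \<in> PhiDom"
  shows "root_fixpoint r c \<longleftrightarrow>
           root_fixpoint (root_vec (fst (Tmap D (r, c)))) (root_vec (snd (Tmap D (r, c))))"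
proof -
  have "pnorm p v > 0" if "\<forall>i. 0 \<le> v$i" "v \<noteq> 0" for v :: "real^'q"
    using pnorm_eq_sum_powr[OF that(1), of p] sum_powr_pos[OF that, of p] by simp
  hence "pnorm p r > 0" "pnorm p c > 0" using assms by (auto simp: PhiDom_def)
  thus ?thesis by (simp add: root_vec_Tmap[OF assms] root_fixpoint_scaleR_iff)
qed

lemma Phi_eq_ln_root_form:
  assumes "(r, c) \<in> PhiDom"
  shows "Phi B D (r, c) = (let (a, b) = Tmap D (r, c) in
           if root_form a b > 0 then ereal (real D * ln (root_form a b)) else -\<infinity>)"
proof -
  obtain a b where ab: "Tmap D (r, c) = (a, b)" by fastforce
  have "a$i powr s = r$i / pnorm p r" "b$j powr s = c$j / pnorm p c" for i j
    using root_vec_Tmap[OF assms] by (simp_all add: ab root_vec_def vec_eq_iff)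
  hence "root_form a b = (r \<bullet> (B *v c)) / (pnorm p r * pnorm p c)"
    by (simp add: root_form_def inner_matrix_vector_mult_eq_sum sum_distrib_left sum_divide_distrib
        ac_simps)
  thus ?thesis by (simp add: ab Phi_def)
qed

end

section \<open>Couplings and \<open>Psi1\<close>\<close>

lemma ereal_sum_minf:
  fixes f :: "'a \<Rightarrow> ereal"
  assumes "finite A" "a \<in> A" "f a = -\<infinity>" "\<forall>x\<in>A. f x \<noteq> \<infinity>"
  shows "sum f A = -\<infinity>"
proof -
  have "sum f A = f a + sum f (A - {a})" using assms by (simp add: sum.remove)
  moreover have "sum f (A - {a}) \<noteq> \<infinity>" using assms by (simp add: sum_Pinfty)
  ultimately show ?thesis using assms(3) by simp
qed

context spin_system begin

definition couplings :: "real^'q \<Rightarrow> real^'q \<Rightarrow> (real^'q^'q) set" where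
  "couplings a b = {x. (\<forall>i j. 0 \<le> x$i$j) \<and> (\<forall>i. (\<Sum>j\<in>UNIV. x$i$j) = a$i)
                       \<and> (\<forall>j. (\<Sum>i\<in>UNIV. x$i$j) = b$j)}"

definition supported :: "real^'q^'q \<Rightarrow> bool" where
  "supported x \<longleftrightarrow> (\<forall>i j. 0 < x$i$j \<longrightarrow> 0 < B$i$j)"

definition neg_relent :: "real^'q^'q \<Rightarrow> ereal" where
  "neg_relent x = (\<Sum>i\<in>UNIV. \<Sum>j\<in>UNIV. xlogterm (B$i$j) (x$i$j))"

definition neg_relent_real :: "real^'q^'q \<Rightarrow> real" where
  "neg_relent_real x = (\<Sum>i\<in>UNIV. \<Sum>j\<in>UNIV. x$i$j * ln (B$i$j) - x$i$j * ln (x$i$j))"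

definition marginal_entropy :: "real^'q \<Rightarrow> real^'q \<Rightarrow> real" where
  "marginal_entropy a b = (real D - 1) * ((\<Sum>i\<in>UNIV. a$i * ln (a$i)) + (\<Sum>j\<in>UNIV. b$j * ln (b$j)))"

definition tilted :: "real^'q \<Rightarrow> real^'q \<Rightarrow> 'q \<Rightarrow> 'q \<Rightarrow> real" where
  "tilted a b i j = B$i$j * a$i powr s * b$j powr s"

lemma Psi1_eq_couplings:
  "Psi1 B D (a, b) = ereal (marginal_entropy a b) + ereal (real D) * (SUP x\<in>couplings a b. neg_relent x)"
  by (simp add: Psi1_def marginal_entropy_def couplings_def neg_relent_def)

lemma couplings_nonneg: "x \<in> couplings a b \<Longrightarrow> 0 \<le> x$i$j"
  by (simp add: couplings_def)

lemma coupling_le_marginals: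
  assumes "x \<in> couplings a b"
  shows "x$i$j \<le> a$i" "x$i$j \<le> b$j"
proof -
  have "x$i$j \<le> (\<Sum>j\<in>UNIV. x$i$j)" "x$i$j \<le> (\<Sum>i\<in>UNIV. x$i$j)"
    using couplings_nonneg[OF assms] by (auto intro: member_le_sum)
  thus "x$i$j \<le> a$i" "x$i$j \<le> b$j" using assms by (simp_all add: couplings_def)
qed

lemma coupling_pos_imp:
  assumes "x \<in> couplings a b" "supported x" "x$i$j > 0"
  shows "B$i$j > 0" "a$i > 0" "b$j > 0"
  using assms coupling_le_marginals[OF assms(1), of i j] by (auto simp: supported_def)

lemma neg_relent_supported:
  assumes "x \<in> couplings a b" "supported x"
  shows "neg_relent x = ereal (neg_relent_real x)"
proof -
  have "xlogterm (B$i$j) (x$i$j) = ereal (x$i$j * ln (B$i$j) - x$i$j * ln (x$i$j))" for i j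
  proof (cases "x$i$j = 0")
    case False
    with couplings_nonneg[OF assms(1), of i j] have "x$i$j > 0" by simp
    with assms(2) have "B$i$j > 0" by (simp add: supported_def)
    with False show ?thesis by (simp add: xlogterm_def right_diff_distrib)
  qed (simp add: xlogterm_def)
  thus ?thesis by (simp add: neg_relent_def neg_relent_real_def)
qed

lemma neg_relent_unsupported:
  assumes "x \<in> couplings a b" "\<not> supported x"
  shows "neg_relent x = -\<infinity>"
proof -
  obtain i j where ij: "0 < x$i$j" "B$i$j = 0"
    using assms(2) B_nonneg by (auto simp: supported_def order_le_less)
  have fin: "xlogterm b' x' \<noteq> \<infinity>" for b' x' by (simp add: xlogterm_def)
  have "(\<Sum>j\<in>UNIV. xlogterm (B$i$j) (x$i$j)) = -\<infinity>"
    using ij fin by (intro ereal_sum_minf[of UNIV j]) (auto simp: xlogterm_def)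
  moreover have "(\<Sum>j\<in>UNIV. xlogterm (B$i'$j) (x$i'$j)) \<noteq> \<infinity>" for i'
    using fin by (simp add: sum_Pinfty)
  ultimately show ?thesis
    unfolding neg_relent_def
    by (intro ereal_sum_minf[of UNIV i "\<lambda>i. \<Sum>j\<in>UNIV. xlogterm (B$i$j) (x$i$j)"]) auto
qed

lemma marginal_entropy_plus_neg_relent:
  assumes x: "x \<in> couplings a b" and "supported x"
  shows "marginal_entropy a b + real D * neg_relent_real x
           = real D * (\<Sum>i\<in>UNIV. \<Sum>j\<in>UNIV. x$i$j * ln (tilted a b i j / x$i$j))"
proof -
  have rows: "(\<Sum>i\<in>UNIV. a$i * ln (a$i)) = (\<Sum>i\<in>UNIV. \<Sum>j\<in>UNIV. x$i$j * ln (a$i))"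
    using x by (simp add: couplings_def sum_distrib_right[symmetric])
  have "(\<Sum>j\<in>UNIV. b$j * ln (b$j)) = (\<Sum>j\<in>UNIV. \<Sum>i\<in>UNIV. x$i$j * ln (b$j))"
    using x by (simp add: couplings_def sum_distrib_right[symmetric])
  also have "\<dots> = (\<Sum>i\<in>UNIV. \<Sum>j\<in>UNIV. x$i$j * ln (b$j))" by (rule sum.swap)
  finally have cols: "(\<Sum>j\<in>UNIV. b$j * ln (b$j)) = \<dots>" .
  have termwise: "(real D - 1) * (x$i$j * ln (a$i) + x$i$j * ln (b$j))
          + real D * (x$i$j * ln (B$i$j) - x$i$j * ln (x$i$j))
        = real D * (x$i$j * ln (tilted a b i j / x$i$j))" for i j
  proof (cases "x$i$j = 0")
    case False
    with couplings_nonneg[OF x] have "x$i$j > 0" by (simp add: order_le_neq_trans)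
    hence eq: "ln (tilted a b i j / x$i$j) = ln (B$i$j) + s * ln (a$i) + s * ln (b$j) - ln (x$i$j)"
      using coupling_pos_imp[OF assms \<open>x$i$j > 0\<close>] by (simp add: tilted_def ln_div ln_mult ln_powr)
    show ?thesis unfolding D_minus_1_eq eq by (simp add: algebra_simps)
  qed simp
  have "marginal_entropy a b + real D * neg_relent_real x
      = (\<Sum>i\<in>UNIV. \<Sum>j\<in>UNIV. (real D - 1) * (x$i$j * ln (a$i) + x$i$j * ln (b$j))
          + real D * (x$i$j * ln (B$i$j) - x$i$j * ln (x$i$j)))"
    unfolding marginal_entropy_def rows cols neg_relent_real_def
    by (simp add: sum.distrib sum_distrib_left distrib_left)
  also have "\<dots> = real D * (\<Sum>i\<in>UNIV. \<Sum>j\<in>UNIV. x$i$j * ln (tilted a b i j / x$i$j))"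
    unfolding termwise by (simp add: sum_distrib_left)
  finally show ?thesis .
qed

text \<open>Gibbs' inequality: the weights \<open>tilted a b\<close> are the unnormalised optimal coupling.\<close>

lemma sum_xlog_tilted_le:
  assumes x: "x \<in> couplings a b" and sx: "supported x" and a1: "(\<Sum>i\<in>UNIV. a$i) = 1"
  shows "root_form a b > 0 \<and> (\<Sum>i\<in>UNIV. \<Sum>j\<in>UNIV. x$i$j * ln (tilted a b i j / x$i$j)) \<le> ln (root_form a b)"
proof -
  have nn: "0 \<le> x$i$j" "0 \<le> tilted a b i j" for i j
    using couplings_nonneg[OF x] B_nonneg by (simp_all add: tilted_def)
  have sum_tilted: "(\<Sum>i\<in>UNIV. \<Sum>j\<in>UNIV. tilted a b i j) = root_form a b"
    by (simp add: tilted_def root_form_def)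
  have x1: "(\<Sum>i\<in>UNIV. \<Sum>j\<in>UNIV. x$i$j) = 1" using x a1 by (simp add: couplings_def)
  obtain i j where "x$i$j > 0"
  proof (rule ccontr)
    assume "\<not> thesis"
    hence "\<forall>i j. x$i$j = 0" using that nn(1) by (metis order_le_neq_trans)
    thus False using x1 by simp
  qed
  hence "tilted a b i j > 0" using coupling_pos_imp[OF x sx, of i j] by (simp add: tilted_def)
  also have "tilted a b i j \<le> (\<Sum>j\<in>UNIV. tilted a b i j)"
    using nn(2) by (intro member_le_sum) auto
  also have "\<dots> \<le> root_form a b"
    unfolding sum_tilted[symmetric] using nn(2) by (intro member_le_sum sum_nonneg) auto
  finally have G: "root_form a b > 0" .
  have termwise: "x$i$j * ln (tilted a b i j / x$i$j)
      \<le> tilted a b i j / root_form a b - x$i$j + x$i$j * ln (root_form a b)" for i j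
  proof (cases "x$i$j = 0")
    case False
    with nn have xp: "x$i$j > 0" by (simp add: order_le_neq_trans)
    hence yp: "tilted a b i j > 0" using coupling_pos_imp[OF x sx, of i j] by (simp add: tilted_def)
    have "ln (tilted a b i j / x$i$j) = ln (tilted a b i j / (x$i$j * root_form a b)) + ln (root_form a b)"
      using yp xp G by (simp add: ln_div ln_mult)
    also have "\<dots> \<le> tilted a b i j / (x$i$j * root_form a b) - 1 + ln (root_form a b)"
      using ln_le_minus_one[of "tilted a b i j / (x$i$j * root_form a b)"] yp xp G by simp
    finally show ?thesis using xp G by (simp add: mult_left_mono field_simps)
  qed (use nn G in simp)
  have "(\<Sum>i\<in>UNIV. \<Sum>j\<in>UNIV. x$i$j * ln (tilted a b i j / x$i$j))
      \<le> (\<Sum>i\<in>UNIV. \<Sum>j\<in>UNIV. tilted a b i j / root_form a b - x$i$j + x$i$j * ln (root_form a b))"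
    by (intro sum_mono termwise)
  also have "\<dots> = ln (root_form a b)"
    using G x1 sum_tilted
    by (simp add: sum.distrib sum_subtractf sum_divide_distrib[symmetric] sum_distrib_right[symmetric])
  finally show ?thesis using G by simp
qed

lemma Psi1_ge_coupling:
  assumes "x \<in> couplings a b" "supported x"
  shows "ereal (marginal_entropy a b + real D * neg_relent_real x) \<le> Psi1 B D (a, b)"
proof -
  have "ereal (real D) * neg_relent x \<le> ereal (real D) * (SUP x\<in>couplings a b. neg_relent x)"
    using assms(1) by (intro ereal_mult_left_mono SUP_upper) auto
  hence "ereal (marginal_entropy a b) + ereal (real D) * neg_relent x \<le> Psi1 B D (a, b)"
    unfolding Psi1_eq_couplings by (rule add_mono[OF order_refl])
  thus ?thesis using neg_relent_supported[OF assms] by simp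
qed

lemma Psi1_le_ln_root_form:
  assumes "(a, b) \<in> SimDom"
  shows "Psi1 B D (a, b) \<le> (if root_form a b > 0 then ereal (real D * ln (root_form a b)) else -\<infinity>)"
proof -
  have a1: "(\<Sum>i\<in>UNIV. a$i) = 1" using assms by (simp add: SimDom_def)
  define bound where "bound = (if root_form a b > 0
      then ereal ((real D * ln (root_form a b) - marginal_entropy a b) / real D) else -\<infinity>)"
  have "neg_relent x \<le> bound" if x: "x \<in> couplings a b" for x
  proof (cases "supported x")
    case True
    from sum_xlog_tilted_le[OF x True a1] have "root_form a b > 0"
      and "marginal_entropy a b + real D * neg_relent_real x \<le> real D * ln (root_form a b)"
      using D_gt_2 by (auto simp: marginal_entropy_plus_neg_relent[OF x True])
    thus ?thesis
      using neg_relent_supported[OF x True] D_gt_2 by (simp add: bound_def field_simps)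
  qed (simp add: neg_relent_unsupported[OF x])
  hence "ereal (real D) * (SUP x\<in>couplings a b. neg_relent x) \<le> ereal (real D) * bound"
    by (intro ereal_mult_left_mono SUP_least) auto
  hence "Psi1 B D (a, b) \<le> ereal (marginal_entropy a b) + ereal (real D) * bound"
    unfolding Psi1_eq_couplings by (rule add_mono[OF order_refl])
  also have "\<dots> = (if root_form a b > 0 then ereal (real D * ln (root_form a b)) else -\<infinity>)"
    using D_gt_2 by (simp add: bound_def)
  finally show ?thesis .
qed

lemma Psi1_le_ereal_ln_root_form:
  "(a, b) \<in> SimDom \<Longrightarrow> Psi1 B D (a, b) \<le> ereal (real D * ln (root_form a b))"
  using Psi1_le_ln_root_form[of a b] by (auto split: if_splits)

lemma Psi1_ne_PInf: "(a, b) \<in> SimDom \<Longrightarrow> Psi1 B D (a, b) \<noteq> \<infinity>"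
  using Psi1_le_ln_root_form[of a b] by (auto split: if_splits)

lemma root_fixpoint_marginal_eqs:
  assumes "\<forall>i. 0 \<le> a$i" "\<forall>j. 0 \<le> b$j" "root_fixpoint (root_vec a) (root_vec b)"
  shows "\<exists>\<kappa>>0. \<forall>i. (\<Sum>j\<in>UNIV. B$i$j * b$j powr s) = \<kappa> * a$i powr (1 - s)"
    and "\<exists>\<mu>>0. \<forall>j. (\<Sum>i\<in>UNIV. B$i$j * a$i powr s) = \<mu> * b$j powr (1 - s)"
  using assms
  by (auto simp: root_fixpoint_def matrix_vector_mult_nth vector_matrix_mult_nth root_vec_def
      powr_powr s_mult_p_minus_1)

text \<open>At a fixpoint the row and column sums of \<open>tilted a b\<close> are proportional to \<open>a\<close> and \<open>b\<close>, so
  its normalisation is a coupling; by Gibbs' inequality it is the optimal one.\<close>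

lemma root_fixpoint_tilted_coupling:
  assumes ab: "(a, b) \<in> SimDom" and f: "root_fixpoint (root_vec a) (root_vec b)"
  shows "root_form a b > 0" and "(\<chi> i j. tilted a b i j / root_form a b) \<in> couplings a b"
proof -
  have a: "\<forall>i. 0 \<le> a$i" "(\<Sum>i\<in>UNIV. a$i) = 1" and b: "\<forall>j. 0 \<le> b$j" "(\<Sum>j\<in>UNIV. b$j) = 1"
    using ab by (auto simp: SimDom_def)
  obtain \<kappa> \<mu> where k: "\<kappa> > 0" "\<forall>i. (\<Sum>j\<in>UNIV. B$i$j * b$j powr s) = \<kappa> * a$i powr (1 - s)"
    and m: "\<mu> > 0" "\<forall>j. (\<Sum>i\<in>UNIV. B$i$j * a$i powr s) = \<mu> * b$j powr (1 - s)"
    using root_fixpoint_marginal_eqs[OF a(1) b(1) f] by blast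
  have powr_s_1_minus_s: "y powr s * y powr (1 - s) = y" if "0 \<le> y" for y :: real
    using that by (simp add: powr_add[symmetric])
  have row: "(\<Sum>j\<in>UNIV. tilted a b i j) = \<kappa> * a$i" for i
  proof -
    have "(\<Sum>j\<in>UNIV. tilted a b i j) = a$i powr s * (\<Sum>j\<in>UNIV. B$i$j * b$j powr s)"
      by (simp add: tilted_def sum_distrib_left ac_simps)
    also have "\<dots> = \<kappa> * (a$i powr s * a$i powr (1 - s))" using k(2) by simp
    finally show ?thesis using powr_s_1_minus_s a(1) by simp
  qed
  have col: "(\<Sum>i\<in>UNIV. tilted a b i j) = \<mu> * b$j" for j
  proof -
    have "(\<Sum>i\<in>UNIV. tilted a b i j) = b$j powr s * (\<Sum>i\<in>UNIV. B$i$j * a$i powr s)"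
      by (simp add: tilted_def sum_distrib_left ac_simps)
    also have "\<dots> = \<mu> * (b$j powr s * b$j powr (1 - s))" using m(2) by simp
    finally show ?thesis using powr_s_1_minus_s b(1) by simp
  qed
  have G: "root_form a b = (\<Sum>i\<in>UNIV. \<Sum>j\<in>UNIV. tilted a b i j)"
    by (simp add: tilted_def root_form_def)
  have G\<kappa>: "root_form a b = \<kappa>" using a(2) by (simp add: G row sum_distrib_left[symmetric])
  have G\<mu>: "root_form a b = \<mu>"
    using b(2) by (simp add: G sum.swap[of _ UNIV] col sum_distrib_left[symmetric])
  show Gpos: "root_form a b > 0" using G\<kappa> k(1) by simp
  have "0 \<le> tilted a b i j" for i j using B_nonneg by (simp add: tilted_def)
  thus "(\<chi> i j. tilted a b i j / root_form a b) \<in> couplings a b"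
    using Gpos by (auto simp: couplings_def sum_divide_distrib[symmetric] row col)
      (simp_all add: G\<kappa>[symmetric] G\<mu>[symmetric])
qed

lemma Psi1_at_root_fixpoint:
  assumes ab: "(a, b) \<in> SimDom" and f: "root_fixpoint (root_vec a) (root_vec b)"
  shows "root_form a b > 0 \<and> Psi1 B D (a, b) = ereal (real D * ln (root_form a b))"
proof -
  define x where "x = (\<chi> i j. tilted a b i j / root_form a b)"
  note Gpos = root_fixpoint_tilted_coupling(1)[OF ab f]
  have x: "x \<in> couplings a b" unfolding x_def by (rule root_fixpoint_tilted_coupling(2)[OF ab f])
  have xe: "x$i$j = tilted a b i j / root_form a b" for i j by (simp add: x_def)
  have sx: "supported x"
    using Gpos B_nonneg
    by (auto simp: supported_def xe tilted_def zero_less_divide_iff zero_less_mult_iff)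
  have "x$i$j * ln (tilted a b i j / x$i$j) = x$i$j * ln (root_form a b)" for i j
    using Gpos by (cases "tilted a b i j = 0") (simp_all add: xe)
  hence "(\<Sum>i\<in>UNIV. \<Sum>j\<in>UNIV. x$i$j * ln (tilted a b i j / x$i$j))
           = (\<Sum>i\<in>UNIV. \<Sum>j\<in>UNIV. x$i$j) * ln (root_form a b)"
    by (simp only: sum_distrib_right)
  also have "(\<Sum>i\<in>UNIV. \<Sum>j\<in>UNIV. x$i$j) = 1"
    using Gpos by (simp add: xe sum_divide_distrib[symmetric] tilted_def root_form_def)
  finally have "marginal_entropy a b + real D * neg_relent_real x = real D * ln (root_form a b)"
    using marginal_entropy_plus_neg_relent[OF x sx] by simp
  hence "ereal (real D * ln (root_form a b)) \<le> Psi1 B D (a, b)" using Psi1_ge_coupling[OF x sx] by simp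
  moreover have "Psi1 B D (a, b) \<le> ereal (real D * ln (root_form a b))"
    using Psi1_le_ln_root_form[OF ab] Gpos by simp
  ultimately show ?thesis using Gpos by simp
qed

lemma SimDom_segment:
  fixes a b a' b' :: "real^'q"
  assumes "(a, b) \<in> SimDom" "(a', b') \<in> SimDom" "0 \<le> t" "t \<le> 1"
  shows "(a + t *\<^sub>R (a' - a), b + t *\<^sub>R (b' - b)) \<in> SimDom"
proof -
  have *: "(\<forall>i. 0 \<le> (v + t *\<^sub>R (v' - v))$i) \<and> (\<Sum>i\<in>UNIV. (v + t *\<^sub>R (v' - v))$i) = 1"
    if "\<forall>i. 0 \<le> v$i" "(\<Sum>i\<in>UNIV. v$i) = 1" "\<forall>i. 0 \<le> v'$i" "(\<Sum>i\<in>UNIV. v'$i) = 1"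
    for v v' :: "real^'q"
  proof -
    have e: "(v + t *\<^sub>R (v' - v))$i = (1 - t) * v$i + t * v'$i" for i by (simp add: algebra_simps)
    show ?thesis unfolding e using that assms
      by (simp add: sum.distrib sum_distrib_left[symmetric])
  qed
  show ?thesis using *[of a a'] *[of b b'] assms by (auto simp: SimDom_def)
qed

end

section \<open>Critical points of \<open>Psi1\<close>\<close>

lemma sum_on_support_diff_nonpos:
  fixes a a' :: "real^'n"
  assumes "\<forall>i. 0 \<le> a$i" "(\<Sum>i\<in>UNIV. a$i) = 1" "\<forall>i. 0 \<le> a'$i" "(\<Sum>i\<in>UNIV. a'$i) = 1"
  shows "(\<Sum>i\<in>UNIV. a$i powr (e - 1) * a$i powr (1 - e) * (a'$i - a$i)) \<le> 0"
proof -
  have "(\<Sum>i\<in>UNIV. a$i powr (e - 1) * a$i powr (1 - e) * (a'$i - a$i)) \<le> (\<Sum>i\<in>UNIV. a'$i - a$i)"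
    using assms by (intro sum_mono) (simp add: powr_add[symmetric])
  also have "\<dots> = 0" using assms by (simp add: sum_subtractf)
  finally show ?thesis .
qed

context spin_system begin

lemma root_fixpoint_support:
  assumes "\<forall>i. 0 \<le> a$i" "\<forall>j. 0 \<le> b$j" "root_fixpoint (root_vec a) (root_vec b)" "B$i$j > 0"
  shows "a$i = 0 \<longleftrightarrow> b$j = 0"
proof -
  obtain \<kappa> where k: "\<forall>i. (\<Sum>j\<in>UNIV. B$i$j * b$j powr s) = \<kappa> * a$i powr (1 - s)"
    using root_fixpoint_marginal_eqs(1)[OF assms(1-3)] by blast
  obtain \<mu> where m: "\<forall>j. (\<Sum>i\<in>UNIV. B$i$j * a$i powr s) = \<mu> * b$j powr (1 - s)"
    using root_fixpoint_marginal_eqs(2)[OF assms(1-3)] by blast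
  have "b$j = 0" if "a$i = 0"
  proof -
    have "(\<Sum>j\<in>UNIV. B$i$j * b$j powr s) = 0" using k that by simp
    hence "B$i$j * b$j powr s = 0" using B_nonneg assms(2) by (simp add: sum_nonneg_eq_0_iff)
    thus ?thesis using assms(4) by simp
  qed
  moreover have "a$i = 0" if "b$j = 0"
  proof -
    have "(\<Sum>i\<in>UNIV. B$i$j * a$i powr s) = 0" using m that by simp
    hence "B$i$j * a$i powr s = 0" using B_nonneg assms(1) by (simp add: sum_nonneg_eq_0_iff)
    thus ?thesis using assms(4) by simp
  qed
  ultimately show ?thesis by blast
qed

lemma root_form_segment_deriv_nonpos:
  fixes a b a' b' :: "real^'q"
  assumes ab: "(a, b) \<in> SimDom" and ab': "(a', b') \<in> SimDom"
    and f: "root_fixpoint (root_vec a) (root_vec b)"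
  obtains G' where "G' \<le> 0"
    and "((\<lambda>t. root_form (a + t *\<^sub>R (a' - a)) (b + t *\<^sub>R (b' - b))) has_real_derivative G') (at_right 0)"
proof
  have a: "\<forall>i. 0 \<le> a$i" "(\<Sum>i\<in>UNIV. a$i) = 1" "\<forall>j. 0 \<le> b$j" "(\<Sum>j\<in>UNIV. b$j) = 1"
    and a': "\<forall>i. 0 \<le> a'$i" "(\<Sum>i\<in>UNIV. a'$i) = 1" "\<forall>j. 0 \<le> b'$j" "(\<Sum>j\<in>UNIV. b'$j) = 1"
    using ab ab' by (auto simp: SimDom_def)
  obtain \<kappa> where k: "\<kappa> > 0" "\<forall>i. (\<Sum>j\<in>UNIV. B$i$j * b$j powr s) = \<kappa> * a$i powr (1 - s)"
    using root_fixpoint_marginal_eqs(1)[OF a(1) a(3) f] by blast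
  obtain \<mu> where m: "\<mu> > 0" "\<forall>j. (\<Sum>i\<in>UNIV. B$i$j * a$i powr s) = \<mu> * b$j powr (1 - s)"
    using root_fixpoint_marginal_eqs(2)[OF a(1) a(3) f] by blast
  define G' where "G' = (\<Sum>i\<in>UNIV. \<Sum>j\<in>UNIV. B$i$j * s * (a$i powr (s - 1) * (a'$i - a$i) * b$j powr s
                          + a$i powr s * b$j powr (s - 1) * (b'$j - b$j)))"
  have "((\<lambda>t. \<Sum>i\<in>UNIV. \<Sum>j\<in>UNIV.
      B$i$j * (a$i + t * (a'$i - a$i)) powr s * (b$j + t * (b'$j - b$j)) powr s)
      has_real_derivative G') (at_right 0)"
    unfolding G'_def
    by (intro DERIV_sum has_real_derivative_segment_powr_product)
      (use a a' B_nonneg s_pos two_s_gt_1 root_fixpoint_support[OF a(1) a(3) f] in auto)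
  thus "((\<lambda>t. root_form (a + t *\<^sub>R (a' - a)) (b + t *\<^sub>R (b' - b))) has_real_derivative G') (at_right 0)"
    by (simp add: root_form_def)
  have "(\<Sum>i\<in>UNIV. \<Sum>j\<in>UNIV. B$i$j * s * (a$i powr (s - 1) * (a'$i - a$i) * b$j powr s))
      = (\<Sum>i\<in>UNIV. s * (a$i powr (s - 1) * (a'$i - a$i)) * (\<Sum>j\<in>UNIV. B$i$j * b$j powr s))"
    by (simp add: sum_distrib_left ac_simps)
  also have "\<dots> = s * \<kappa> * (\<Sum>i\<in>UNIV. a$i powr (s - 1) * a$i powr (1 - s) * (a'$i - a$i))"
    using k(2) by (simp add: sum_distrib_left ac_simps)
  finally have ga: "(\<Sum>i\<in>UNIV. \<Sum>j\<in>UNIV. B$i$j * s * (a$i powr (s - 1) * (a'$i - a$i) * b$j powr s))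
      = s * \<kappa> * (\<Sum>i\<in>UNIV. a$i powr (s - 1) * a$i powr (1 - s) * (a'$i - a$i))" .
  have "(\<Sum>i\<in>UNIV. \<Sum>j\<in>UNIV. B$i$j * s * (a$i powr s * b$j powr (s - 1) * (b'$j - b$j)))
      = (\<Sum>j\<in>UNIV. s * (b$j powr (s - 1) * (b'$j - b$j)) * (\<Sum>i\<in>UNIV. B$i$j * a$i powr s))"
    by (subst sum.swap) (simp add: sum_distrib_left ac_simps)
  also have "\<dots> = s * \<mu> * (\<Sum>j\<in>UNIV. b$j powr (s - 1) * b$j powr (1 - s) * (b'$j - b$j))"
    using m(2) by (simp add: sum_distrib_left ac_simps)
  finally have gb: "(\<Sum>i\<in>UNIV. \<Sum>j\<in>UNIV. B$i$j * s * (a$i powr s * b$j powr (s - 1) * (b'$j - b$j)))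
      = s * \<mu> * (\<Sum>j\<in>UNIV. b$j powr (s - 1) * b$j powr (1 - s) * (b'$j - b$j))" .
  have "G' = s * \<kappa> * (\<Sum>i\<in>UNIV. a$i powr (s - 1) * a$i powr (1 - s) * (a'$i - a$i))
                      + s * \<mu> * (\<Sum>j\<in>UNIV. b$j powr (s - 1) * b$j powr (1 - s) * (b'$j - b$j))"
    unfolding G'_def ga[symmetric] gb[symmetric] by (simp add: distrib_left sum.distrib)
  also have "\<dots> \<le> 0"
    using sum_on_support_diff_nonpos[OF a(1,2) a'(1,2)] sum_on_support_diff_nonpos[OF a(3,4) a'(3,4)]
      k(1) m(1) s_pos
    by (intro add_nonpos_nonpos mult_nonneg_nonpos) auto
  finally show "G' \<le> 0" .
qed

lemma root_fixpoint_imp_crit_point_Psi1: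
  assumes ab: "(a, b) \<in> SimDom" and f: "root_fixpoint (root_vec a) (root_vec b)"
  shows "crit_point (Psi1 B D) SimDom (a, b)"
proof -
  from Psi1_at_root_fixpoint[OF ab f]
  have Gpos: "root_form a b > 0" and Psi: "Psi1 B D (a, b) = ereal (real D * ln (root_form a b))"
    by auto
  have "\<forall>\<epsilon>>0. \<forall>\<^sub>F t in at_right 0.
      Psi1 B D ((a, b) + t *\<^sub>R ((a', b') - (a, b))) \<le> Psi1 B D (a, b) + ereal (\<epsilon> * t)"
    if ab': "(a', b') \<in> SimDom" for a' b'
  proof (rule ereal_slope_bound_if_dominated)
    define G where "G t = root_form (a + t *\<^sub>R (a' - a)) (b + t *\<^sub>R (b' - b))" for t
    obtain G' where "G' \<le> 0" and dG: "(G has_real_derivative G') (at_right 0)"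
      using root_form_segment_deriv_nonpos[OF ab ab' f] unfolding G_def[symmetric] by blast
    have G0: "G 0 = root_form a b" by (simp add: G_def)
    have "((\<lambda>t. real D * ln (G t)) has_real_derivative real D * (G' / G 0)) (at_right 0)"
      using Gpos G0 by (auto intro!: derivative_eq_intros dG)
    moreover have "real D * (G' / G 0) \<le> 0"
      using \<open>G' \<le> 0\<close> Gpos G0 D_gt_2 by (simp add: mult_nonneg_nonpos divide_nonpos_pos)
    ultimately show "right_slope_nonpos (\<lambda>t. real D * ln (G t))"
      using right_slope_nonpos_iff_deriv by blast
    show "Psi1 B D (a, b) = ereal (real D * ln (G 0))" using Psi G0 by simp
    show "\<forall>\<^sub>F t in at_right 0.
        Psi1 B D ((a, b) + t *\<^sub>R ((a', b') - (a, b))) \<le> ereal (real D * ln (G t))"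
      using eventually_at_right_0_lt_1
    proof eventually_elim
      case (elim t)
      with SimDom_segment[OF ab ab', of t] show ?case
        using Psi1_le_ereal_ln_root_form by (simp add: G_def)
    qed
  qed
  thus ?thesis unfolding crit_point_def using ab Psi by fastforce
qed

lemma supported_iff:
  assumes "\<forall>i j. 0 \<le> x$i$j"
  shows "supported x \<longleftrightarrow> (\<forall>i j. B$i$j = 0 \<longrightarrow> x$i$j = 0)"
  using assms B_nonneg unfolding supported_def by (metis less_eq_real_def less_irrefl)

lemma compact_supported_couplings: "compact {x \<in> couplings a b. supported x}"
proof (rule compact_eq_bounded_closed[THEN iffD2], rule conjI)
  show "bounded {x \<in> couplings a b. supported x}" unfolding bounded_iff
  proof (intro exI ballI)
    fix x assume "x \<in> {x \<in> couplings a b. supported x}"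
    hence x: "x \<in> couplings a b" by simp
    have "norm x \<le> (\<Sum>i\<in>UNIV. norm (x$i))" unfolding norm_vec_def by (rule L2_set_le_sum) simp
    also have "\<dots> \<le> (\<Sum>i\<in>UNIV. \<Sum>j\<in>UNIV. \<bar>x$i$j\<bar>)" by (intro sum_mono norm_le_l1_cart)
    also have "\<dots> = (\<Sum>i\<in>UNIV. a$i)" using x couplings_nonneg[OF x] by (simp add: couplings_def)
    finally show "norm x \<le> (\<Sum>i\<in>UNIV. a$i)" .
  qed
  have "{x \<in> couplings a b. supported x} =
      {x. (\<forall>i j. 0 \<le> x$i$j) \<and> (\<forall>i. (\<Sum>j\<in>UNIV. x$i$j) = a$i) \<and> (\<forall>j. (\<Sum>i\<in>UNIV. x$i$j) = b$j)
          \<and> (\<forall>i j. B$i$j = 0 \<longrightarrow> x$i$j = 0)}"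
    using supported_iff by (auto simp: couplings_def)
  also have "closed \<dots>"
  proof -
    have "closed {x::real^'q^'q. B$i$j = 0 \<longrightarrow> x$i$j = 0}" for i j
      by (cases "B$i$j = 0") (auto intro: closed_Collect_eq continuous_on_const continuous_on_matrix_entry)
    thus ?thesis
      by (intro closed_Collect_conj closed_Collect_all closed_Collect_le closed_Collect_eq
          continuous_on_const continuous_on_sum continuous_on_matrix_entry) auto
  qed
  finally show "closed {x \<in> couplings a b. supported x}" .
qed

lemma continuous_on_neg_relent_real: "continuous_on {x \<in> couplings a b. supported x} neg_relent_real"
proof -
  have "continuous_on {x \<in> couplings a b. supported x} (\<lambda>x. x$i$j * ln (B$i$j))" for i j
    by (intro continuous_on_mult continuous_on_const continuous_on_matrix_entry)
  moreover have "continuous_on {x \<in> couplings a b. supported x} (\<lambda>x. x$i$j * ln (x$i$j))" for i j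
  proof -
    have "(\<lambda>x. x$i$j) ` {x \<in> couplings a b. supported x} \<subseteq> {0..}" by (auto simp: couplings_def)
    thus ?thesis using continuous_on_compose2[OF continuous_on_xlnx continuous_on_matrix_entry] by blast
  qed
  ultimately show ?thesis unfolding neg_relent_real_def
    by (intro continuous_on_sum continuous_on_diff)
qed

lemma Psi1_attained:
  assumes "Psi1 B D (a, b) \<noteq> -\<infinity>"
  obtains x where "x \<in> couplings a b" "supported x"
    "Psi1 B D (a, b) = ereal (marginal_entropy a b + real D * neg_relent_real x)"
proof -
  have "{x \<in> couplings a b. supported x} \<noteq> {}"
  proof
    assume "{x \<in> couplings a b. supported x} = {}"
    hence "(SUP x\<in>couplings a b. neg_relent x) = -\<infinity>"
      using neg_relent_unsupported by (auto intro: SUP_eqI)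
    thus False using assms D_gt_2 by (simp add: Psi1_eq_couplings)
  qed
  then obtain x where x: "x \<in> couplings a b" "supported x"
    and max: "\<forall>y\<in>{x \<in> couplings a b. supported x}. neg_relent_real y \<le> neg_relent_real x"
    using continuous_attains_sup[OF compact_supported_couplings _ continuous_on_neg_relent_real]
    by blast
  have "(SUP y\<in>couplings a b. neg_relent y) = ereal (neg_relent_real x)"
  proof (rule antisym)
    show "(SUP y\<in>couplings a b. neg_relent y) \<le> ereal (neg_relent_real x)"
    proof (rule SUP_least)
      fix y assume y: "y \<in> couplings a b"
      show "neg_relent y \<le> ereal (neg_relent_real x)"
        using max y neg_relent_supported[OF y] neg_relent_unsupported[OF y]
        by (cases "supported y") auto
    qed
    show "ereal (neg_relent_real x) \<le> (SUP y\<in>couplings a b. neg_relent y)"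
      using SUP_upper[OF x(1), of neg_relent] neg_relent_supported[OF x] by simp
  qed
  thus ?thesis using that x by (simp add: Psi1_eq_couplings)
qed

lemma couplings_segment:
  assumes "x \<in> couplings a b" "x' \<in> couplings a' b'" "0 \<le> t" "t \<le> 1"
  shows "x + t *\<^sub>R (x' - x) \<in> couplings (a + t *\<^sub>R (a' - a)) (b + t *\<^sub>R (b' - b))"
proof -
  have "(x + t *\<^sub>R (x' - x))$i$j = (1 - t) * x$i$j + t * x'$i$j" for i j
    by (simp add: algebra_simps)
  hence "0 \<le> (x + t *\<^sub>R (x' - x))$i$j" for i j
    using assms couplings_nonneg[OF assms(1), of i j] couplings_nonneg[OF assms(2), of i j]
    by (simp add: add_nonneg_nonneg)
  moreover have "(\<Sum>j\<in>UNIV. (x + t *\<^sub>R (x' - x))$i$j) = (a + t *\<^sub>R (a' - a))$i" for i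
    using assms(1,2) unfolding couplings_def
    by (simp add: sum.distrib sum_distrib_left[symmetric] sum_subtractf)
  moreover have "(\<Sum>i\<in>UNIV. (x + t *\<^sub>R (x' - x))$i$j) = (b + t *\<^sub>R (b' - b))$j" for j
    using assms(1,2) unfolding couplings_def
    by (simp add: sum.distrib sum_distrib_left[symmetric] sum_subtractf)
  ultimately show ?thesis unfolding couplings_def by blast
qed

lemma supported_segment:
  assumes "x \<in> couplings a b" "x' \<in> couplings a' b'" "supported x" "supported x'" "0 \<le> t" "t \<le> 1"
  shows "supported (x + t *\<^sub>R (x' - x))"
proof -
  have "0 \<le> x$i$j" "0 \<le> x'$i$j" for i j using assms(1,2) couplings_nonneg by auto
  moreover have "(x + t *\<^sub>R (x' - x))$i$j = (1 - t) * x$i$j + t * x'$i$j" for i j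
    by (simp add: algebra_simps)
  ultimately show ?thesis using assms(3-6)
    unfolding supported_def
    by (smt (verit, best) mult_nonneg_nonneg mult_nonneg_nonpos)
qed

text \<open>Along the segment from an optimal coupling \<open>x\<close> of \<open>(a, b)\<close> to a coupling \<open>x'\<close> of
  \<open>(a', b')\<close>, the objective of \<open>Psi1\<close> is a differentiable function plus
  \<open>singular_coeff * t ln t\<close>, where the right derivative of the differentiable part is \<open>regular_slope\<close>.\<close>

definition singular_coeff ::
    "real^'q \<Rightarrow> real^'q \<Rightarrow> real^'q^'q \<Rightarrow> real^'q \<Rightarrow> real^'q \<Rightarrow> real^'q^'q \<Rightarrow> real" where
  "singular_coeff a b x a' b' x' =
     (real D - 1) * ((\<Sum>i\<in>UNIV. xlnx_segment_singular (a$i) (a'$i))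
                    + (\<Sum>j\<in>UNIV. xlnx_segment_singular (b$j) (b'$j)))
     - real D * (\<Sum>i\<in>UNIV. \<Sum>j\<in>UNIV. xlnx_segment_singular (x$i$j) (x'$i$j))"

definition regular_slope ::
    "real^'q \<Rightarrow> real^'q \<Rightarrow> real^'q^'q \<Rightarrow> real^'q \<Rightarrow> real^'q \<Rightarrow> real^'q^'q \<Rightarrow> real" where
  "regular_slope a b x a' b' x' =
     (real D - 1) * ((\<Sum>i\<in>UNIV. xlnx_segment_slope (a$i) (a'$i))
                    + (\<Sum>j\<in>UNIV. xlnx_segment_slope (b$j) (b'$j)))
     + real D * (\<Sum>i\<in>UNIV. \<Sum>j\<in>UNIV. (x'$i$j - x$i$j) * ln (B$i$j) - xlnx_segment_slope (x$i$j) (x'$i$j))"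

lemma objective_segment_split:
  fixes a b a' b' :: "real^'q" and x x' :: "real^'q^'q"
  assumes a0: "\<forall>i. 0 \<le> a$i" "\<forall>j. 0 \<le> b$j" and a0': "\<forall>i. 0 \<le> a'$i" "\<forall>j. 0 \<le> b'$j"
    and xn: "\<forall>i j. 0 \<le> x$i$j" and xn': "\<forall>i j. 0 \<le> x'$i$j"
  obtains g where "(g has_real_derivative regular_slope a b x a' b' x') (at_right 0)"
    and "g 0 = marginal_entropy a b + real D * neg_relent_real x"
    and "\<forall>\<^sub>F t in at_right 0.
      marginal_entropy (a + t *\<^sub>R (a' - a)) (b + t *\<^sub>R (b' - b)) + real D * neg_relent_real (x + t *\<^sub>R (x' - x))
        = g t + singular_coeff a b x a' b' x' * (t * ln t)"
proof
  define g where "g t =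
      (real D - 1) * ((\<Sum>i\<in>UNIV. xlnx_segment_regular (a$i) (a'$i) t)
                     + (\<Sum>j\<in>UNIV. xlnx_segment_regular (b$j) (b'$j) t))
      + real D * (\<Sum>i\<in>UNIV. \<Sum>j\<in>UNIV. (x$i$j + t * (x'$i$j - x$i$j)) * ln (B$i$j)
                                      - xlnx_segment_regular (x$i$j) (x'$i$j) t)" for t
  have h_eq: "marginal_entropy (a + t *\<^sub>R (a' - a)) (b + t *\<^sub>R (b' - b))
      + real D * neg_relent_real (x + t *\<^sub>R (x' - x)) =
      (real D - 1) * ((\<Sum>i\<in>UNIV. xlnx_segment (a$i) (a'$i) t) + (\<Sum>j\<in>UNIV. xlnx_segment (b$j) (b'$j) t))
      + real D * (\<Sum>i\<in>UNIV. \<Sum>j\<in>UNIV. (x$i$j + t * (x'$i$j - x$i$j)) * ln (B$i$j)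
                                      - xlnx_segment (x$i$j) (x'$i$j) t)" for t
    by (simp add: marginal_entropy_def neg_relent_real_def xlnx_segment_def)
  show "(g has_real_derivative regular_slope a b x a' b' x') (at_right 0)"
    unfolding g_def regular_slope_def
    by (intro derivative_intros DERIV_sum has_real_derivative_xlnx_segment_regular)
      (auto intro!: derivative_eq_intros has_real_derivative_xlnx_segment_regular simp: a0 xn)
  show "g 0 = marginal_entropy a b + real D * neg_relent_real x"
    using h_eq[of 0] by (simp add: g_def)
  show "\<forall>\<^sub>F t in at_right 0.
      marginal_entropy (a + t *\<^sub>R (a' - a)) (b + t *\<^sub>R (b' - b)) + real D * neg_relent_real (x + t *\<^sub>R (x' - x))
        = g t + singular_coeff a b x a' b' x' * (t * ln t)"
  proof (rule eventually_mono[OF eventually_at_right_less])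
    fix t :: real assume t: "0 < t"
    have e12: "(\<Sum>i\<in>UNIV. xlnx_segment (a$i) (a'$i) t) = (\<Sum>i\<in>UNIV. xlnx_segment_regular (a$i) (a'$i) t)
            + (\<Sum>i\<in>UNIV. xlnx_segment_singular (a$i) (a'$i)) * (t * ln t)"
      "(\<Sum>j\<in>UNIV. xlnx_segment (b$j) (b'$j) t) = (\<Sum>j\<in>UNIV. xlnx_segment_regular (b$j) (b'$j) t)
            + (\<Sum>j\<in>UNIV. xlnx_segment_singular (b$j) (b'$j)) * (t * ln t)"
      using a0 a0' t by (simp_all add: xlnx_segment_split sum.distrib sum_distrib_right)
    have e3: "(\<Sum>i\<in>UNIV. \<Sum>j\<in>UNIV. (x$i$j + t * (x'$i$j - x$i$j)) * ln (B$i$j)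
                                      - xlnx_segment (x$i$j) (x'$i$j) t)
      = (\<Sum>i\<in>UNIV. \<Sum>j\<in>UNIV. (x$i$j + t * (x'$i$j - x$i$j)) * ln (B$i$j)
                                      - xlnx_segment_regular (x$i$j) (x'$i$j) t)
        - (\<Sum>i\<in>UNIV. \<Sum>j\<in>UNIV. xlnx_segment_singular (x$i$j) (x'$i$j)) * (t * ln t)"
      using xn xn' t
      by (simp add: xlnx_segment_split sum.distrib sum_distrib_right sum_distrib_left sum_subtractf
          algebra_simps)
    show "marginal_entropy (a + t *\<^sub>R (a' - a)) (b + t *\<^sub>R (b' - b))
        + real D * neg_relent_real (x + t *\<^sub>R (x' - x)) = g t + singular_coeff a b x a' b' x' * (t * ln t)"
      unfolding h_eq e12 e3 g_def singular_coeff_def by (simp add: algebra_simps)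
  qed
qed

lemma crit_point_Psi1_segment_condition:
  fixes a b a' b' :: "real^'q" and x x' :: "real^'q^'q"
  assumes ab: "(a, b) \<in> SimDom" and cr: "crit_point (Psi1 B D) SimDom (a, b)"
    and x: "x \<in> couplings a b" "supported x"
      "Psi1 B D (a, b) = ereal (marginal_entropy a b + real D * neg_relent_real x)"
    and ab': "(a', b') \<in> SimDom" and x': "x' \<in> couplings a' b'" "supported x'"
  shows "singular_coeff a b x a' b' x' \<ge> 0 \<and>
           (singular_coeff a b x a' b' x' = 0 \<longrightarrow> regular_slope a b x a' b' x' \<le> 0)"
proof -
  define h where "h t = marginal_entropy (a + t *\<^sub>R (a' - a)) (b + t *\<^sub>R (b' - b))
                        + real D * neg_relent_real (x + t *\<^sub>R (x' - x))" for t
  obtain g where dg: "(g has_real_derivative regular_slope a b x a' b' x') (at_right 0)"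
    and g0: "g 0 = h 0" and hg: "\<forall>\<^sub>F t in at_right 0. h t = g t + singular_coeff a b x a' b' x' * (t * ln t)"
    using objective_segment_split[of a b a' b' x x'] ab ab' couplings_nonneg[OF x(1)]
      couplings_nonneg[OF x'(1)] unfolding h_def[symmetric]
    by (auto simp: SimDom_def h_def)
  have "right_slope_nonpos h" unfolding right_slope_nonpos_def
  proof (intro allI impI)
    fix \<epsilon> :: real assume "\<epsilon> > 0"
    with cr ab' have "\<forall>\<^sub>F t in at_right 0.
        Psi1 B D ((a, b) + t *\<^sub>R ((a', b') - (a, b))) \<le> Psi1 B D (a, b) + ereal (\<epsilon> * t)"
      unfolding crit_point_def by blast
    with eventually_at_right_0_lt_1 show "\<forall>\<^sub>F t in at_right 0. h t \<le> h 0 + \<epsilon> * t"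
    proof eventually_elim
      case (elim t)
      have "ereal (h t) \<le> Psi1 B D (a + t *\<^sub>R (a' - a), b + t *\<^sub>R (b' - b))"
        unfolding h_def using elim
        by (intro Psi1_ge_coupling couplings_segment[OF x(1) x'(1)]
            supported_segment[OF x(1) x'(1) x(2) x'(2)]) auto
      also have "\<dots> \<le> ereal (h 0 + \<epsilon> * t)" using elim x(3) by (simp add: h_def)
      finally show ?case by simp
    qed
  qed
  thus ?thesis by (rule right_slope_nonpos_xlnx_perturbation[OF dg hg g0[symmetric]])
qed

end

lemma axis_one_nth: "(axis i (1::real) :: real^'n) $ k = (if k = i then 1 else 0)"
  by (simp add: axis_def)

lemma axis_axis_one_nth: "(axis i (axis j (1::real)) :: real^'m^'n) $ k $ l = (if k = i \<and> l = j then 1 else 0)"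
  by (simp add: axis_def)

context spin_system begin

lemma axis_in_SimDom: "(axis i 1, axis j 1) \<in> SimDom"
  by (simp add: SimDom_def axis_one_nth)

lemma axis_axis_in_couplings: "axis i (axis j 1) \<in> couplings (axis i 1) (axis j 1)"
proof -
  have "(\<Sum>l\<in>UNIV. axis i (axis j (1::real)) $ k $ l) = axis i 1 $ k" for k
    by (cases "k = i") (simp_all add: axis_axis_one_nth axis_one_nth)
  moreover have "(\<Sum>k\<in>UNIV. axis i (axis j (1::real)) $ k $ l) = axis j 1 $ l" for l
    by (cases "l = j") (simp_all add: axis_axis_one_nth axis_one_nth)
  ultimately show ?thesis by (simp add: couplings_def axis_axis_one_nth)
qed

lemma singular_coeff_to_vertex:
  "singular_coeff a b x (axis i 1) (axis j 1) (axis i (axis j 1)) =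
     (real D - 1) * (xlnx_segment_singular (a$i) 1 + xlnx_segment_singular (b$j) 1)
     - real D * xlnx_segment_singular (x$i$j) 1"
proof -
  have "xlnx_segment_singular y 0 = 0" for y by (simp add: xlnx_segment_singular_def)
  thus ?thesis
    unfolding singular_coeff_def axis_one_nth axis_axis_one_nth
    using sum_at_indicator[of "\<lambda>k. xlnx_segment_singular (a$k)" i]
      sum_at_indicator[of "\<lambda>k. xlnx_segment_singular (b$k)" j]
      sum_at_indicator2[of "\<lambda>k l. xlnx_segment_singular (x$k$l)" i j]
    by simp
qed

lemma regular_slope_to_vertex:
  assumes ab: "(a, b) \<in> SimDom" and x: "x \<in> couplings a b" "supported x" and xij: "x$i$j > 0"
  shows "regular_slope a b x (axis i 1) (axis j 1) (axis i (axis j 1))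
           = real D * ln (tilted a b i j / x$i$j) - (marginal_entropy a b + real D * neg_relent_real x)"
proof -
  have a1: "(\<Sum>k\<in>UNIV. a$k) = 1" "(\<Sum>l\<in>UNIV. b$l) = 1" using ab by (auto simp: SimDom_def)
  have x1: "(\<Sum>k\<in>UNIV. \<Sum>l\<in>UNIV. x$k$l) = 1" using x(1) a1(1) by (simp add: couplings_def)
  have Bij: "B$i$j > 0" and ai: "a$i > 0" and bj: "b$j > 0" using coupling_pos_imp[OF x xij] by auto
  let ?e = "\<lambda>k l. if k = i \<and> l = j then 1 else (0::real)"
  have slope_x: "(\<Sum>k\<in>UNIV. \<Sum>l\<in>UNIV. (?e k l - x$k$l) * ln (B$k$l)
                     - xlnx_segment_slope (x$k$l) (?e k l))
      = ln (B$i$j) - (\<Sum>k\<in>UNIV. \<Sum>l\<in>UNIV. x$k$l * ln (B$k$l))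
        - (ln (x$i$j) - (\<Sum>k\<in>UNIV. \<Sum>l\<in>UNIV. x$k$l * ln (x$k$l)))"
    using sum_at_indicator2[of "\<lambda>k l y. y * ln (B$k$l)" i j]
      sum_xlnx_segment_slope_to_vertex2[of "\<lambda>k l. x$k$l", OF x1 xij]
    by (simp add: sum_subtractf left_diff_distrib)
  have neg_relent: "neg_relent_real x =
      (\<Sum>k\<in>UNIV. \<Sum>l\<in>UNIV. x$k$l * ln (B$k$l)) - (\<Sum>k\<in>UNIV. \<Sum>l\<in>UNIV. x$k$l * ln (x$k$l))"
    by (simp add: neg_relent_real_def sum_subtractf)
  have ln_tilted: "ln (tilted a b i j / x$i$j) = ln (B$i$j) + s * ln (a$i) + s * ln (b$j) - ln (x$i$j)"
    using xij Bij ai bj by (simp add: tilted_def ln_div ln_mult ln_powr)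
  show ?thesis
    unfolding regular_slope_def axis_one_nth axis_axis_one_nth slope_x neg_relent ln_tilted
      sum_xlnx_segment_slope_to_vertex[of "\<lambda>k. a$k", OF a1(1) ai]
      sum_xlnx_segment_slope_to_vertex[of "\<lambda>l. b$l", OF a1(2) bj]
      marginal_entropy_def D_minus_1_eq
    by (simp add: algebra_simps)
qed

text \<open>The critical point condition tested in the direction of the vertex \<open>(e_i, e_j)\<close>, with
  the point mass at \<open>(i, j)\<close> as target coupling.\<close>

lemma crit_point_Psi1_vertex_condition:
  assumes ab: "(a, b) \<in> SimDom" and cr: "crit_point (Psi1 B D) SimDom (a, b)"
    and x: "x \<in> couplings a b" "supported x"
      "Psi1 B D (a, b) = ereal (marginal_entropy a b + real D * neg_relent_real x)"
    and Bij: "B$i$j > 0"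
  shows "(real D - 1) * (xlnx_segment_singular (a$i) 1 + xlnx_segment_singular (b$j) 1)
           - real D * xlnx_segment_singular (x$i$j) 1 \<ge> 0"
    and "x$i$j > 0 \<Longrightarrow>
           real D * ln (tilted a b i j / x$i$j) \<le> marginal_entropy a b + real D * neg_relent_real x"
proof -
  have "supported (axis i (axis j 1))" using Bij by (simp add: supported_def axis_axis_one_nth)
  note cond = crit_point_Psi1_segment_condition[OF ab cr x axis_in_SimDom axis_axis_in_couplings this,
      unfolded singular_coeff_to_vertex]
  thus "(real D - 1) * (xlnx_segment_singular (a$i) 1 + xlnx_segment_singular (b$j) 1)
          - real D * xlnx_segment_singular (x$i$j) 1 \<ge> 0"
    by simp
  assume xij: "x$i$j > 0"
  with coupling_pos_imp[OF x(1,2) xij] cond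
  show "real D * ln (tilted a b i j / x$i$j) \<le> marginal_entropy a b + real D * neg_relent_real x"
    by (simp add: regular_slope_to_vertex[OF ab x(1,2) xij] xlnx_segment_singular_def)
qed

end

lemma weighted_mean_eq_bound_imp_eq:
  fixes w f :: "'n::finite \<Rightarrow> 'm::finite \<Rightarrow> real"
  assumes w: "\<forall>k l. 0 \<le> w k l" "(\<Sum>k\<in>UNIV. \<Sum>l\<in>UNIV. w k l) = 1"
    and le: "\<forall>k l. 0 < w k l \<longrightarrow> f k l \<le> M" and mean: "(\<Sum>k\<in>UNIV. \<Sum>l\<in>UNIV. w k l * f k l) = M"
    and "0 < w i j"
  shows "f i j = M"
proof -
  define d where "d k l = w k l * (M - f k l)" for k l
  have nonneg: "0 \<le> d k l" for k l
    using w(1) le by (cases "w k l = 0") (auto simp: d_def less_le)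
  moreover have "(\<Sum>k\<in>UNIV. \<Sum>l\<in>UNIV. d k l) = 0"
    using w(2) mean by (simp add: d_def right_diff_distrib sum_subtractf sum_distrib_right[symmetric])
  ultimately have "(\<Sum>l\<in>UNIV. d i l) = 0"
    by (subst (asm) sum_nonneg_eq_0_iff) (auto intro: sum_nonneg)
  hence "d i j = 0" using nonneg by (subst (asm) sum_nonneg_eq_0_iff) auto
  thus ?thesis using \<open>0 < w i j\<close> by (simp add: d_def)
qed

context spin_system begin

lemma optimal_coupling_support:
  assumes ab: "(a, b) \<in> SimDom" and cr: "crit_point (Psi1 B D) SimDom (a, b)"
    and x: "x \<in> couplings a b" "supported x"
      "Psi1 B D (a, b) = ereal (marginal_entropy a b + real D * neg_relent_real x)"
    and Bij: "B$i$j > 0"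
  shows "a$i > 0 \<Longrightarrow> b$j > 0 \<Longrightarrow> x$i$j > 0" and "a$i = 0 \<longleftrightarrow> b$j = 0"
proof -
  note K = crit_point_Psi1_vertex_condition(1)[OF ab cr x Bij]
  have xn: "0 \<le> x$i$j" using couplings_nonneg[OF x(1)] .
  show "x$i$j > 0" if "a$i > 0" "b$j > 0"
    using K that xn D_gt_2 by (cases "x$i$j = 0") (auto simp: xlnx_segment_singular_def)
  have "x$i$j = 0" if "a$i = 0 \<or> b$j = 0"
    using that coupling_le_marginals[OF x(1), of i j] xn by auto
  thus "a$i = 0 \<longleftrightarrow> b$j = 0"
    using K D_gt_2 by (auto simp: xlnx_segment_singular_def split: if_splits)
qed

text \<open>Complementary slackness in the vertex directions makes \<open>D ln (tilted / x)\<close> constant on the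
  support of an optimal coupling \<open>x\<close>, so \<open>x\<close> is proportional to \<open>tilted a b\<close>.\<close>

lemma optimal_coupling_proportional_tilted:
  assumes ab: "(a, b) \<in> SimDom" and cr: "crit_point (Psi1 B D) SimDom (a, b)"
    and x: "x \<in> couplings a b" "supported x"
      "Psi1 B D (a, b) = ereal (marginal_entropy a b + real D * neg_relent_real x)"
  obtains \<gamma> where "\<gamma> > 0" "\<And>i j. x$i$j = \<gamma> * tilted a b i j"
proof -
  have a: "\<forall>i. 0 \<le> a$i" "(\<Sum>i\<in>UNIV. a$i) = 1" "\<forall>j. 0 \<le> b$j"
    using ab by (auto simp: SimDom_def)
  have xn: "\<forall>k l. 0 \<le> x$k$l" using couplings_nonneg[OF x(1)] by blast
  have x1: "(\<Sum>k\<in>UNIV. \<Sum>l\<in>UNIV. x$k$l) = 1" using x(1) a(2) by (simp add: couplings_def)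
  define M where "M = marginal_entropy a b + real D * neg_relent_real x"
  define \<gamma> where "\<gamma> = exp (- M / real D)"
  have le: "\<forall>k l. 0 < x$k$l \<longrightarrow> real D * ln (tilted a b k l / x$k$l) \<le> M"
    using crit_point_Psi1_vertex_condition(2)[OF ab cr x] coupling_pos_imp(1)[OF x(1,2)]
    by (simp add: M_def)
  have mean: "(\<Sum>k\<in>UNIV. \<Sum>l\<in>UNIV. x$k$l * (real D * ln (tilted a b k l / x$k$l))) = M"
    using marginal_entropy_plus_neg_relent[OF x(1,2)]
    by (simp add: M_def sum_distrib_left mult.left_commute)
  have log_ratio: "real D * ln (tilted a b i j / x$i$j) = M" if "x$i$j > 0" for i j
    using weighted_mean_eq_bound_imp_eq[of "\<lambda>k l. x$k$l" "\<lambda>k l. real D * ln (tilted a b k l / x$k$l)",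
        OF xn x1 le mean that] .
  have "x$i$j = \<gamma> * tilted a b i j" for i j
  proof (cases "x$i$j > 0")
    case True
    with coupling_pos_imp[OF x(1,2) True] have "tilted a b i j > 0" by (simp add: tilted_def)
    moreover have "ln (tilted a b i j / x$i$j) = M / real D"
      using log_ratio[OF True] D_gt_2 by (simp add: field_simps)
    ultimately have "tilted a b i j / x$i$j = exp (M / real D)"
      using True by (metis divide_pos_pos exp_ln)
    thus ?thesis using True by (simp add: \<gamma>_def exp_minus field_simps)
  next
    case False
    with xn have "x$i$j = 0" by (simp add: not_less order_antisym)
    moreover have "tilted a b i j = 0"
      using optimal_coupling_support(1)[OF ab cr x, of i j] \<open>x$i$j = 0\<close> B_nonneg[of i j] a(1,3)
      by (auto simp: tilted_def less_le)
    ultimately show ?thesis by simp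
  qed
  thus ?thesis using that[of \<gamma>] by (simp add: \<gamma>_def)
qed

lemma proportional_tilted_marginal_eqs:
  assumes ab: "(a, b) \<in> SimDom" and x: "x \<in> couplings a b"
    and \<gamma>: "\<gamma> > 0" "\<And>i j. x$i$j = \<gamma> * tilted a b i j"
    and support: "\<And>i j. B$i$j > 0 \<Longrightarrow> a$i = 0 \<longleftrightarrow> b$j = 0"
  shows "(\<Sum>j\<in>UNIV. B$i$j * b$j powr s) = (1 / \<gamma>) * a$i powr (1 - s)"
    and "(\<Sum>i\<in>UNIV. B$i$j * a$i powr s) = (1 / \<gamma>) * b$j powr (1 - s)"
proof -
  have a: "\<forall>i. 0 \<le> a$i" "\<forall>j. 0 \<le> b$j" using ab by (auto simp: SimDom_def)
  have zero: "B$i$j * b$j powr s = 0 \<and> B$i$j * a$i powr s = 0" if "a$i = 0 \<or> b$j = 0" for i j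
    using that support[of i j] B_nonneg[of i j] by (cases "B$i$j = 0") (auto simp: less_le)
  show "(\<Sum>j\<in>UNIV. B$i$j * b$j powr s) = (1 / \<gamma>) * a$i powr (1 - s)"
  proof (cases "a$i = 0")
    case False
    with a have "a$i > 0" by (simp add: less_le)
    have "a$i = \<gamma> * a$i powr s * (\<Sum>j\<in>UNIV. B$i$j * b$j powr s)"
      using x \<gamma>(2) by (simp add: couplings_def tilted_def sum_distrib_left ac_simps)
    thus ?thesis using \<open>a$i > 0\<close> \<gamma>(1) by (simp add: powr_diff field_simps)
  next
    case True
    hence "(\<Sum>j\<in>UNIV. B$i$j * b$j powr s) = 0" using zero by (intro sum.neutral) blast
    thus ?thesis using True by simp
  qed
  show "(\<Sum>i\<in>UNIV. B$i$j * a$i powr s) = (1 / \<gamma>) * b$j powr (1 - s)"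
  proof (cases "b$j = 0")
    case False
    with a have "b$j > 0" by (simp add: less_le)
    have "b$j = \<gamma> * b$j powr s * (\<Sum>i\<in>UNIV. B$i$j * a$i powr s)"
      using x \<gamma>(2) by (simp add: couplings_def tilted_def sum_distrib_left ac_simps)
    thus ?thesis using \<open>b$j > 0\<close> \<gamma>(1) by (simp add: powr_diff field_simps)
  next
    case True
    hence "(\<Sum>i\<in>UNIV. B$i$j * a$i powr s) = 0" using zero by (intro sum.neutral) blast
    thus ?thesis using True by simp
  qed
qed

lemma root_fixpoint_if_marginal_eqs:
  assumes "\<kappa> > 0" "\<And>i. (\<Sum>j\<in>UNIV. B$i$j * b$j powr s) = \<kappa> * a$i powr (1 - s)"
    and "\<mu> > 0" "\<And>j. (\<Sum>i\<in>UNIV. B$i$j * a$i powr s) = \<mu> * b$j powr (1 - s)"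
  shows "root_fixpoint (root_vec a) (root_vec b)"
proof -
  have "\<forall>i. (B *v root_vec b)$i = \<kappa> * root_vec a $ i powr (p - 1)"
    using assms(2) by (simp add: matrix_vector_mult_nth root_vec_def powr_powr s_mult_p_minus_1)
  moreover have "\<forall>j. (root_vec a v* B)$j = \<mu> * root_vec b $ j powr (p - 1)"
    using assms(4) by (simp add: vector_matrix_mult_nth root_vec_def powr_powr s_mult_p_minus_1)
  ultimately show ?thesis unfolding root_fixpoint_def using assms(1,3) by blast
qed

lemma crit_point_Psi1_imp_root_fixpoint:
  assumes ab: "(a, b) \<in> SimDom" and cr: "crit_point (Psi1 B D) SimDom (a, b)"
  shows "root_fixpoint (root_vec a) (root_vec b)"
proof -
  obtain x where x: "x \<in> couplings a b" "supported x"
      "Psi1 B D (a, b) = ereal (marginal_entropy a b + real D * neg_relent_real x)"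
    using Psi1_attained cr unfolding crit_point_def by blast
  obtain \<gamma> where \<gamma>: "\<gamma> > 0" "\<And>i j. x$i$j = \<gamma> * tilted a b i j"
    using optimal_coupling_proportional_tilted[OF ab cr x] by blast
  note marginal_eqs = proportional_tilted_marginal_eqs[OF ab x(1) \<gamma> optimal_coupling_support(2)[OF ab cr x]]
  show ?thesis
    using \<gamma>(1) by (intro root_fixpoint_if_marginal_eqs[where \<kappa> = "1 / \<gamma>" and \<mu> = "1 / \<gamma>"] marginal_eqs) simp_all
qed

end

section \<open>Positivity of local maxima\<close>

lemma aperiodic_mat_odd_closed_walk:
  assumes "aperiodic_mat A"
  obtains k where "odd k" "0 < mpow A k $ i $ i"
proof -
  have "\<not> (\<forall>k\<in>{k. 0 < k \<and> 0 < mpow A k $ i $ i}. 2 dvd k)"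
  proof
    assume "\<forall>k\<in>{k. 0 < k \<and> 0 < mpow A k $ i $ i}. 2 dvd k"
    hence "2 dvd Gcd {k. 0 < k \<and> 0 < mpow A k $ i $ i}" by (intro Gcd_greatest) auto
    thus False using assms unfolding aperiodic_mat_def by simp
  qed
  thus thesis using that by auto
qed

context spin_system begin

lemma mpow_pos_step:
  assumes "0 < mpow B (Suc k) $ i $ j"
  obtains l where "0 < B$i$l" "0 < mpow B k $ l $ j"
proof -
  have "0 < (\<Sum>l\<in>UNIV. B$i$l * mpow B k $ l $ j)"
    using assms by (simp add: matrix_matrix_mult_def)
  then obtain l where l: "0 < B$i$l * mpow B k $ l $ j"
    by (metis (mono_tags, lifting) not_le sum_nonpos)
  hence "0 < B$i$l" using B_nonneg[of i l] by (cases "B$i$l = 0") (auto simp: less_le)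
  with l show thesis using that by (simp add: zero_less_mult_iff)
qed

text \<open>At a fixpoint, positivity spreads along the edges of \<open>B\<close>, switching between \<open>r\<close> and \<open>c\<close>
  at every step (using the symmetry of \<open>B\<close> for the step from \<open>c\<close> back to \<open>r\<close>).\<close>

lemma root_fixpoint_support_walk:
  assumes sym: "\<forall>i j. B$i$j = B$j$i" and r: "\<forall>i. 0 \<le> r$i" and c: "\<forall>j. 0 \<le> c$j"
    and f: "root_fixpoint r c" and walk: "0 < mpow B k $ i $ j"
  shows "(r$i > 0 \<longrightarrow> (if even k then r$j > 0 else c$j > 0))
       \<and> (c$i > 0 \<longrightarrow> (if even k then c$j > 0 else r$j > 0))"
proof -
  obtain \<kappa> \<mu> where k: "\<kappa> > 0" "\<forall>i. (B *v c)$i = \<kappa> * r$i powr (p - 1)"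
    and m: "\<mu> > 0" "\<forall>j. (r v* B)$j = \<mu> * c$j powr (p - 1)"
    using f unfolding root_fixpoint_def by blast
  have r_to_c: "c$j > 0" if "r$i > 0" "B$i$j > 0" for i j
  proof -
    have "0 < B$i$j * r$i" using that by simp
    also have "B$i$j * r$i \<le> (r v* B)$j"
      unfolding vector_matrix_mult_nth using B_nonneg r by (intro member_le_sum) auto
    finally have "0 < \<mu> * c$j powr (p - 1)" using m(2) by simp
    hence "c$j \<noteq> 0" by auto
    thus ?thesis using c by (simp add: less_le)
  qed
  have c_to_r: "r$j > 0" if "c$i > 0" "B$i$j > 0" for i j
  proof -
    have "0 < B$j$i * c$i" using that sym by simp
    also have "B$j$i * c$i \<le> (B *v c)$j"
      unfolding matrix_vector_mult_nth using B_nonneg c by (intro member_le_sum) auto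
    finally have "0 < \<kappa> * r$j powr (p - 1)" using k(2) by simp
    hence "r$j \<noteq> 0" by auto
    thus ?thesis using r by (simp add: less_le)
  qed
  from walk show ?thesis
  proof (induction k arbitrary: i)
    case 0
    thus ?case by (simp add: mat_def split: if_splits)
  next
    case (Suc k)
    from Suc.prems obtain l where l: "0 < B$i$l" "0 < mpow B k $ l $ j" by (rule mpow_pos_step)
    show ?case using Suc.IH[OF l(2)] r_to_c[OF _ l(1)] c_to_r[OF _ l(1)] by auto
  qed
qed

lemma root_fixpoint_pos:
  assumes sym: "\<forall>i j. B$i$j = B$j$i" and erg: "ergodic_mat B"
    and r: "\<forall>i. 0 \<le> r$i" "r \<noteq> 0" and c: "\<forall>j. 0 \<le> c$j" and f: "root_fixpoint r c"
  shows "(\<forall>i. 0 < r$i) \<and> (\<forall>j. 0 < c$j)"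
proof -
  note walk = root_fixpoint_support_walk[OF sym r(1) c f]
  obtain i0 where "r$i0 \<noteq> 0" using r(2) by (metis vec_eq_iff zero_index)
  with r(1) have i0: "r$i0 > 0" by (simp add: less_le)
  obtain k where k: "odd k" "0 < mpow B k $ i0 $ i0"
    using erg aperiodic_mat_odd_closed_walk unfolding ergodic_mat_def by blast
  have c0: "c$i0 > 0" using walk[OF k(2)] i0 k(1) by simp
  have "r$j > 0 \<and> c$j > 0" for j
  proof -
    obtain k where "0 < mpow B k $ i0 $ j"
      using erg unfolding ergodic_mat_def irreducible_mat_def by blast
    from walk[OF this] i0 c0 show ?thesis by (cases "even k") auto
  qed
  thus ?thesis by simp
qed

lemma Tmap_in_SimDom:
  fixes r c :: "real^'q"
  shows "(r, c) \<in> PhiDom \<Longrightarrow> Tmap D (r, c) \<in> SimDom"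
  using Tmap_image by blast

lemma tree_fixpoint_iff_crit_point_Phi:
  assumes "(r, c) \<in> PhiDom"
  shows "tree_fixpoint B D r c \<longleftrightarrow> crit_point (Phi B D) PhiDom (r, c)"
  using assms tree_fixpoint_iff_root_fixpoint crit_point_Phi_iff_root_fixpoint[OF assms]
  by (simp add: PhiDom_def)

lemma crit_point_Psi1_iff_root_fixpoint:
  assumes "(a, b) \<in> SimDom"
  shows "crit_point (Psi1 B D) SimDom (a, b) \<longleftrightarrow> root_fixpoint (root_vec a) (root_vec b)"
  using root_fixpoint_imp_crit_point_Psi1[OF assms] crit_point_Psi1_imp_root_fixpoint[OF assms] by blast

lemma crit_point_Phi_iff_crit_point_Psi1:
  assumes "(r, c) \<in> PhiDom"
  shows "crit_point (Phi B D) PhiDom (r, c) \<longleftrightarrow> crit_point (Psi1 B D) SimDom (Tmap D (r, c))"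
  using crit_point_Phi_iff_root_fixpoint[OF assms] root_fixpoint_iff_Tmap[OF assms]
    crit_point_Psi1_iff_root_fixpoint[of "fst (Tmap D (r, c))" "snd (Tmap D (r, c))"]
    Tmap_in_SimDom[OF assms]
  by simp

lemma Phi_eq_Psi1_Tmap:
  assumes "crit_point (Phi B D) PhiDom (r, c)"
  shows "Phi B D (r, c) = Psi1 B D (Tmap D (r, c))"
proof -
  have rc: "(r, c) \<in> PhiDom" using assms by (simp add: crit_point_def)
  obtain a b where ab: "Tmap D (r, c) = (a, b)" by fastforce
  have "root_fixpoint (root_vec a) (root_vec b)"
    using assms crit_point_Phi_iff_root_fixpoint[OF rc] root_fixpoint_iff_Tmap[OF rc] by (simp add: ab)
  with Tmap_in_SimDom[OF rc] show ?thesis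
    using Psi1_at_root_fixpoint Phi_eq_ln_root_form[OF rc] by (simp add: ab)
qed

lemma local_max_Phi_pos:
  assumes "\<forall>i j. B$i$j = B$j$i" "ergodic_mat B" and lm: "local_max (Phi B D) PhiDom (r, c)"
  shows "(\<forall>i. 0 < r$i) \<and> (\<forall>j. 0 < c$j)"
proof -
  have rc: "(r, c) \<in> PhiDom" using lm by (simp add: local_max_def)
  have "crit_point (Phi B D) PhiDom (r, c)"
  proof (rule local_max_imp_crit_point[OF lm])
    show "Phi B D (r, c) \<noteq> \<infinity>" using Phi_eq_Phi_formula[OF rc] by simp
  next
    fix q :: "(real^'q) \<times> (real^'q)" and t :: real assume "q \<in> PhiDom" "0 \<le> t" "t \<le> 1"
    thus "(r, c) + t *\<^sub>R (q - (r, c)) \<in> PhiDom"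
      using PhiDom_segment[OF rc, of "fst q" "snd q" t] by (cases q) simp
  qed
  hence "root_fixpoint r c" using crit_point_Phi_iff_root_fixpoint[OF rc] by simp
  moreover have "\<forall>i. 0 \<le> r$i" "r \<noteq> 0" "\<forall>j. 0 \<le> c$j" using rc by (auto simp: PhiDom_def)
  ultimately show ?thesis using root_fixpoint_pos[OF assms(1,2)] by blast
qed

lemma local_max_Psi1_pos:
  assumes "\<forall>i j. B$i$j = B$j$i" "ergodic_mat B" and lm: "local_max (Psi1 B D) SimDom (a, b)"
  shows "(\<forall>i. 0 < a$i) \<and> (\<forall>j. 0 < b$j)"
proof -
  have ab: "(a, b) \<in> SimDom" using lm by (simp add: local_max_def)
  have "crit_point (Psi1 B D) SimDom (a, b)"
  proof (rule local_max_imp_crit_point[OF lm Psi1_ne_PInf[OF ab]])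
    fix q :: "(real^'q) \<times> (real^'q)" and t :: real assume "q \<in> SimDom" "0 \<le> t" "t \<le> 1"
    thus "(a, b) + t *\<^sub>R (q - (a, b)) \<in> SimDom"
      using SimDom_segment[OF ab, of "fst q" "snd q" t] by (cases q) simp
  qed
  hence f: "root_fixpoint (root_vec a) (root_vec b)" using crit_point_Psi1_iff_root_fixpoint[OF ab] by simp
  have a: "\<forall>i. 0 \<le> a$i" "(\<Sum>i\<in>UNIV. a$i) = 1" "\<forall>j. 0 \<le> b$j"
    using ab by (auto simp: SimDom_def)
  have "root_vec a \<noteq> 0"
  proof
    assume "root_vec a = 0"
    hence "a$i = 0" for i by (metis root_vec_def vec_lambda_beta zero_index powr_eq_0_iff)
    thus False using a(2) by simp
  qed
  hence "(\<forall>i. 0 < root_vec a $ i) \<and> (\<forall>j. 0 < root_vec b $ j)"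
    using root_fixpoint_pos[OF assms(1,2) _ _ _ f] a by (simp add: root_vec_def)
  thus ?thesis using a by (auto simp: root_vec_def less_le)
qed

end

theorem theorem6:
  fixes B :: "real^'q^'q" and \<Delta> :: nat
  assumes "\<Delta> \<ge> 3"
    and "\<forall>i j. 0 \<le> B$i$j"
    and "\<forall>i j. B$i$j = B$j$i"
    and "irreducible_mat B"
  shows
    "(\<forall>r c. (r, c) \<in> PhiDom \<longrightarrow>
        (tree_fixpoint B \<Delta> r c \<longleftrightarrow> crit_point (Phi B \<Delta>) PhiDom (r, c)))
   \<and> (\<forall>r c. (r, c) \<in> PhiDom \<longrightarrow>
        (crit_point (Phi B \<Delta>) PhiDom (r, c) \<longleftrightarrow> crit_point (Psi1 B \<Delta>) SimDom (Tmap \<Delta> (r, c))))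
   \<and> Tmap \<Delta> ` (PhiDom :: ((real^'q) \<times> (real^'q)) set) = SimDom
   \<and> (\<forall>(r::real^'q) c r' c'. (r, c) \<in> PhiDom \<longrightarrow> (r', c') \<in> PhiDom \<longrightarrow> Tmap \<Delta> (r, c) = Tmap \<Delta> (r', c') \<longrightarrow>
        (\<exists>a>0. \<exists>b>0. r' = a *\<^sub>R r \<and> c' = b *\<^sub>R c))
   \<and> (\<forall>r c. crit_point (Phi B \<Delta>) PhiDom (r, c) \<longrightarrow> Phi B \<Delta> (r, c) = Psi1 B \<Delta> (Tmap \<Delta> (r, c)))
   \<and> (ergodic_mat B \<longrightarrow>
        (\<forall>r c. local_max (Phi B \<Delta>) PhiDom (r, c) \<longrightarrow> (\<forall>i. 0 < r$i) \<and> (\<forall>j. 0 < c$j))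
      \<and> (\<forall>a b. local_max (Psi1 B \<Delta>) SimDom (a, b) \<longrightarrow> (\<forall>i. 0 < a$i) \<and> (\<forall>j. 0 < b$j)))"
proof -
  interpret spin_system B \<Delta> using assms(1,2) by unfold_locales auto
  have "ergodic_mat B \<Longrightarrow>
        (\<forall>r c. local_max (Phi B \<Delta>) PhiDom (r, c) \<longrightarrow> (\<forall>i. 0 < r$i) \<and> (\<forall>j. 0 < c$j))
      \<and> (\<forall>a b. local_max (Psi1 B \<Delta>) SimDom (a, b) \<longrightarrow> (\<forall>i. 0 < a$i) \<and> (\<forall>j. 0 < b$j))"
    using local_max_Phi_pos[OF assms(3)] local_max_Psi1_pos[OF assms(3)] by blast
  moreover note tree_fixpoint_iff_crit_point_Phi crit_point_Phi_iff_crit_point_Psi1 Tmap_image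
    Phi_eq_Psi1_Tmap
  ultimately show ?thesis using Tmap_eq_imp_scaled by auto
qed

end
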